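(* Let $\textnormal{R}\in\{\textnormal{ML},\textnormal{wML},\textnormal{C},\textnormal{S},\textnormal{CH},\textnormal{wCH}\}$ and let $\omega\in\Omega$ be a path that is $\textnormal{R}$-random for a computable forecasting system $\varphi$. Then $I_\textnormal{R}(\omega)\subseteq I_\varphi(\omega)$, where $I_\varphi(\omega)=\big[\liminf_{n\to\infty}\underline{\varphi}(\omega_{1:n}),\ \limsup_{n\to\infty}\overline{\varphi}(\omega_{1:n})\big]$.
   Context: $\mathcal{X}=\{0,1\}$; $\Omega=\mathcal{X}^{\mathbb{N}}$ (paths); $\mathbb{S}=\bigcup_{n\geq0}\mathcal{X}^n$ (situations), $\square$ empty string, $|s|$ length, $\omega_{1:n}=(\omega_1,\dots,\omega_n)$, $\omega_{1:0}=\square$. $\mathcal{I}$: nonempty closed intervals $I\subseteq[0,1]$. A forecasting system is a map $\varphi:\mathbb{S}\to\mathcal{I}$, $\underline{\varphi}=\min\varphi$, $\overline{\varphi}=\max\varphi$; an interval forecast $I$ is identified with the constant forecasting system $s\mapsto I$. A real map $r$ on a countable effectively encoded set $\mathcal D$ is computable if there is a recursive $q:\mathcal{D}\times\mathbb{N}_0\to\mathbb{Q}$ with $|r(d)-q(d,n)|<2^{-n}$; lower semicomputable if there is a recursive $q$ with $q(d,n+1)\ge q(d,n)$ and $r(d)=\lim_nq(d,n)$. $\varphi$ computable if $\underline\varphi,\overline\varphi$ are. $\overline{E}_I(f)=\max_{p\in I}[pf(1)+(1-p)f(0)]$. A real process $F:\mathbb S\to\mathbb R$ is a supermartingale for $\varphi$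 if $\overline{E}_{\varphi(s)}(F(s\,\cdot)-F(s))\le0$ for all $s$; a test supermartingale if also $F\ge0$, $F(\square)=1$. A multiplier process $D$ maps situations to gambles $\mathcal X\to\mathbb R$, generating $D^{\circledcirc}(x_1,\dots,x_n)=\prod_{k=0}^{n-1}D(x_{1:k})(x_{k+1})$; lower semicomputable if $(s,x)\mapsto D(s)(x)$ is. For path $\omega$ and forecasting system $\varphi$: ML-random if no lower semicomputable test supermartingale $T$ for $\varphi$ has $\limsup_nT(\omega_{1:n})=\infty$; wML-random if no test supermartingale for $\varphi$ of the form $D^{\circledcirc}$, $D$ lower semicomputable, has this; C-random if no computable test supermartingale for $\varphi$ has this; S-random if there is no computable test supermartingale $T$ for $\varphi$ and computable non-decreasing unbounded $\tau:\mathbb N_0\to\mathbb R_{\ge0}$ with $\limsup_n[T(\omega_{1:n})-\tau(n)]\ge0$; CH-random (resp. wCH-random) if for every recursive (resp. recursive and temporal, i.e. depending only on $|s|$) $S:\mathbb S\to\{0,1\}$ with $\sum_{k=0}^{n-1}S(\omega_{1:k})\to\infty$: $\liminf_n \frac{\sum_{k<n}S(\omega_{1:k})[\omega_{k+1}-\underline\varphi(\omega_{1:k})]}{\sum_{k<n}S(\omega_{1:k})}\ge0$ and $\limsup_n \frac{\sum_{k<n}S(\omega_{1:k})[\omega_{k+1}-\overline\varphi(\omega_{1:k})]}{\sum_{k<n}S(\omega_{1:k})}\le0$. $\mathcal I_\textnormal{R}(\omega)=\{I\in\mathcal I:\omega\text{ R-random for }I\}$, $I_\textnormal{R}(\omega)=\bigcap_{I\in\mathcal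 I_\textnormal{R}(\omega)}I$. *)

theory Defs
  imports "HOL-Analysis.Analysis" "HOL-Library.Nat_Bijection"
begin

datatype rf = Zr | Sc | Pj nat | Cn rf "rf list" | Pr rf rf | Mn rf

inductive rf_eval :: "rf \<Rightarrow> nat list \<Rightarrow> nat \<Rightarrow> bool" where
  zero: "rf_eval Zr xs 0"
| succ: "rf_eval Sc (x # xs) (Suc x)"
| proj: "i < length xs \<Longrightarrow> rf_eval (Pj i) xs (xs ! i)"
| comp: "list_all2 (\<lambda>g y. rf_eval g xs y) gs ys \<Longrightarrow> rf_eval f ys z \<Longrightarrow> rf_eval (Cn f gs) xs z"
| prim0: "rf_eval f xs z \<Longrightarrow> rf_eval (Pr f g) (0 # xs) z"
| primS: "rf_eval (Pr f g) (n # xs) y \<Longrightarrow> rf_eval g (y # n # xs) z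
           \<Longrightarrow> rf_eval (Pr f g) (Suc n # xs) z"
| mu: "rf_eval f (n # xs) 0 \<Longrightarrow> (\<forall>m<n. \<exists>k. rf_eval f (m # xs) (Suc k))
           \<Longrightarrow> rf_eval (Mn f) xs n"

definition recursive_fn :: "(nat \<Rightarrow> nat) \<Rightarrow> bool" where
  "recursive_fn f \<longleftrightarrow> (\<exists>p. \<forall>x. rf_eval p [x] (f x))"

text \<open>Binary strings: situations are bool lists, True = 1, False = 0.\<close>
definition enc_sit :: "bool list \<Rightarrow> nat" where
  "enc_sit s = list_encode (map of_bool s)"

definition enc_rat :: "rat \<Rightarrow> nat" where
  "enc_rat q = prod_encode (int_encode (fst (quotient_of q)), nat (snd (quotient_of q)))"

definition recursive_rat_map :: "('d \<Rightarrow> nat) \<Rightarrow> ('d \<Rightarrow> nat \<Rightarrow> rat) \<Rightarrow> bool" where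
  "recursive_rat_map enc q \<longleftrightarrow>
     (\<exists>g. recursive_fn g \<and> (\<forall>d n. g (prod_encode (enc d, n)) = enc_rat (q d n)))"

definition computable_real :: "('d \<Rightarrow> nat) \<Rightarrow> ('d \<Rightarrow> real) \<Rightarrow> bool" where
  "computable_real enc r \<longleftrightarrow>
     (\<exists>q. recursive_rat_map enc q \<and> (\<forall>d n. \<bar>r d - of_rat (q d n)\<bar> < (1/2) ^ n))"

definition lsc_real :: "('d \<Rightarrow> nat) \<Rightarrow> ('d \<Rightarrow> real) \<Rightarrow> bool" where
  "lsc_real enc r \<longleftrightarrow>
     (\<exists>q. recursive_rat_map enc q \<and> (\<forall>d n. q d (Suc n) \<ge> q d n)
          \<and> (\<forall>d. (\<lambda>n. real_of_rat (q d n)) \<longlonglongrightarrow> r d))"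

definition enc_sx :: "bool list \<times> bool \<Rightarrow> nat" where
  "enc_sx sx = prod_encode (enc_sit (fst sx), of_bool (snd sx))"

definition intervals :: "real set set" where
  "intervals = {{a..b} | a b. 0 \<le> a \<and> a \<le> b \<and> b \<le> 1}"

definition forecasting_system :: "(bool list \<Rightarrow> real set) \<Rightarrow> bool" where
  "forecasting_system \<phi> \<longleftrightarrow> (\<forall>s. \<phi> s \<in> intervals)"

definition lower_fc :: "(bool list \<Rightarrow> real set) \<Rightarrow> bool list \<Rightarrow> real" where
  "lower_fc \<phi> s = Inf (\<phi> s)"

definition upper_fc :: "(bool list \<Rightarrow> real set) \<Rightarrow> bool list \<Rightarrow> real" where
  "upper_fc \<phi> s = Sup (\<phi> s)"

definition computable_fs :: "(bool list \<Rightarrow> real set) \<Rightarrow> bool" where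
  "computable_fs \<phi> \<longleftrightarrow> computable_real enc_sit (lower_fc \<phi>) \<and> computable_real enc_sit (upper_fc \<phi>)"

text \<open>Upper expectation of a gamble f on X = {0,1} (False = 0, True = 1) w.r.t. interval I.\<close>
definition upper_exp :: "real set \<Rightarrow> (bool \<Rightarrow> real) \<Rightarrow> real" where
  "upper_exp I f = Sup ((\<lambda>p. p * f True + (1 - p) * f False) ` I)"

definition supermartingale :: "(bool list \<Rightarrow> real set) \<Rightarrow> (bool list \<Rightarrow> real) \<Rightarrow> bool" where
  "supermartingale \<phi> F \<longleftrightarrow> (\<forall>s. upper_exp (\<phi> s) (\<lambda>x. F (s @ [x]) - F s) \<le> 0)"

definition test_supermartingale :: "(bool list \<Rightarrow> real set) \<Rightarrow> (bool list \<Rightarrow> real) \<Rightarrow> bool" where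
  "test_supermartingale \<phi> T \<longleftrightarrow> supermartingale \<phi> T \<and> (\<forall>s. T s \<ge> 0) \<and> T [] = 1"

definition mult_proc :: "(bool list \<Rightarrow> bool \<Rightarrow> real) \<Rightarrow> bool list \<Rightarrow> real" where
  "mult_proc D s = (\<Prod>k<length s. D (take k s) (s ! k))"

text \<open>omega_{1:n}; paths are indexed from 0, so omega 0 is omega_1.\<close>
definition pre :: "(nat \<Rightarrow> bool) \<Rightarrow> nat \<Rightarrow> bool list" where
  "pre \<omega> n = map \<omega> [0..<n]"

definition unbounded_on :: "(bool list \<Rightarrow> real) \<Rightarrow> (nat \<Rightarrow> bool) \<Rightarrow> bool" where
  "unbounded_on T \<omega> \<longleftrightarrow> limsup (\<lambda>n. ereal (T (pre \<omega> n))) = \<infinity>"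

datatype rnotion = R_ML | R_wML | R_C | R_S | R_CH | R_wCH

definition recursive_selection :: "(bool list \<Rightarrow> bool) \<Rightarrow> bool" where
  "recursive_selection Sel \<longleftrightarrow> (\<exists>g. recursive_fn g \<and> (\<forall>s. g (enc_sit s) = of_bool (Sel s)))"

definition temporal :: "(bool list \<Rightarrow> bool) \<Rightarrow> bool" where
  "temporal Sel \<longleftrightarrow> (\<forall>s t. length s = length t \<longrightarrow> Sel s = Sel t)"

definition sel_count :: "(bool list \<Rightarrow> bool) \<Rightarrow> (nat \<Rightarrow> bool) \<Rightarrow> nat \<Rightarrow> real" where
  "sel_count Sel \<omega> n = (\<Sum>k<n. of_bool (Sel (pre \<omega> k)))"

definition CH_condition :: "(bool list \<Rightarrow> real set) \<Rightarrow> (nat \<Rightarrow> bool) \<Rightarrow> (bool list \<Rightarrow> bool) \<Rightarrow> bool" where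
  "CH_condition \<phi> \<omega> Sel \<longleftrightarrow>
     (filterlim (sel_count Sel \<omega>) at_top sequentially \<longrightarrow>
       liminf (\<lambda>n. ereal ((\<Sum>k<n. of_bool (Sel (pre \<omega> k)) *
                  (of_bool (\<omega> k) - lower_fc \<phi> (pre \<omega> k))) / sel_count Sel \<omega> n)) \<ge> 0
     \<and> limsup (\<lambda>n. ereal ((\<Sum>k<n. of_bool (Sel (pre \<omega> k)) *
                  (of_bool (\<omega> k) - upper_fc \<phi> (pre \<omega> k))) / sel_count Sel \<omega> n)) \<le> 0)"

fun random :: "rnotion \<Rightarrow> (bool list \<Rightarrow> real set) \<Rightarrow> (nat \<Rightarrow> bool) \<Rightarrow> bool" where
  "random R_ML \<phi> \<omega> \<longleftrightarrow>
     \<not> (\<exists>T. lsc_real enc_sit T \<and> test_supermartingale \<phi> T \<and> unbounded_on T \<omega>)"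
| "random R_wML \<phi> \<omega> \<longleftrightarrow>
     \<not> (\<exists>D. lsc_real enc_sx (\<lambda>(s, x). D s x) \<and> test_supermartingale \<phi> (mult_proc D)
           \<and> unbounded_on (mult_proc D) \<omega>)"
| "random R_C \<phi> \<omega> \<longleftrightarrow>
     \<not> (\<exists>T. computable_real enc_sit T \<and> test_supermartingale \<phi> T \<and> unbounded_on T \<omega>)"
| "random R_S \<phi> \<omega> \<longleftrightarrow>
     \<not> (\<exists>T \<tau>. computable_real enc_sit T \<and> test_supermartingale \<phi> T
           \<and> computable_real id \<tau> \<and> mono \<tau> \<and> (\<forall>n. \<tau> n \<ge> 0) \<and> \<not> bdd_above (range \<tau>)
           \<and> limsup (\<lambda>n. ereal (T (pre \<omega> n) - \<tau> n)) \<ge> 0)"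
| "random R_CH \<phi> \<omega> \<longleftrightarrow>
     (\<forall>Sel. recursive_selection Sel \<longrightarrow> CH_condition \<phi> \<omega> Sel)"
| "random R_wCH \<phi> \<omega> \<longleftrightarrow>
     (\<forall>Sel. recursive_selection Sel \<and> temporal Sel \<longrightarrow> CH_condition \<phi> \<omega> Sel)"

definition I_R :: "rnotion \<Rightarrow> (nat \<Rightarrow> bool) \<Rightarrow> real set" where
  "I_R R \<omega> = \<Inter> {I \<in> intervals. random R (\<lambda>_. I) \<omega>}"

definition I_phi :: "(bool list \<Rightarrow> real set) \<Rightarrow> (nat \<Rightarrow> bool) \<Rightarrow> real set" where
  "I_phi \<phi> \<omega> = {x. liminf (\<lambda>n. ereal (lower_fc \<phi> (pre \<omega> n))) \<le> ereal x
                   \<and> ereal x \<le> limsup (\<lambda>n. ereal (upper_fc \<phi> (pre \<omega> n)))}"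

end

theory Submission
  imports Defs "HOL-Library.Sublist"
begin

text \<open>
  Let x lie below the liminf of the lower forecasts along the path and pick b in between.
  As the forecasts are computable, some decidable predicate P on situations forces the lower
  forecast above b and holds on all long prefixes of the path. A test supermartingale for the
  constant forecast [b, 1] that is unbounded on the path can then be started at a long prefix u
  of the path, scaled down so that its value at u is at most 1, and stopped as soon as P fails.
  The result is a test supermartingale for the forecasting system itself, still unbounded on
  the path, and of the same effectivity (computable, lower semicomputable, or generated by a
  lower semicomputable multiplier process) as the original one. So randomness for the system
  implies randomness for [b, 1], which excludes x. For the notions defined by selection rules,
  changing the forecasts on finitely many situations moves the selected averages by at most a
  constant over the number of selected situations. The upper bound is symmetric, with [0, b].
\<close>

section \<open>Recursive functions\<close>

definition rec_fn :: "nat \<Rightarrow> (nat list \<Rightarrow> nat) \<Rightarrow> bool" where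
  "rec_fn k f \<longleftrightarrow> (\<exists>p. \<forall>xs. length xs = k \<longrightarrow> rf_eval p xs (f xs))"

lemma rf_eval_projI: "i < length xs \<Longrightarrow> xs ! i = y \<Longrightarrow> rf_eval (Pj i) xs y"
  using rf_eval.proj by blast

lemma rec_fn_zero: "rec_fn k (\<lambda>_. 0)"
  unfolding rec_fn_def by (auto intro: rf_eval.zero)

lemma rec_fn_proj: "i < k \<Longrightarrow> rec_fn k (\<lambda>xs. xs ! i)"
  unfolding rec_fn_def by (auto intro: rf_eval.proj)

lemma rec_fn_succ: "rec_fn 1 (\<lambda>xs. Suc (hd xs))"
  unfolding rec_fn_def by (rule exI[of _ Sc]) (auto simp: length_Suc_conv intro: rf_eval.succ)

lemma rec_fn_comp1:
  assumes "rec_fn 1 f" "rec_fn k g"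
  shows "rec_fn k (\<lambda>xs. f [g xs])"
proof -
  obtain pf where pf: "\<And>xs. length xs = 1 \<Longrightarrow> rf_eval pf xs (f xs)"
    using assms(1) unfolding rec_fn_def by auto
  obtain pg where pg: "\<And>xs. length xs = k \<Longrightarrow> rf_eval pg xs (g xs)"
    using assms(2) unfolding rec_fn_def by auto
  show ?thesis unfolding rec_fn_def
    by (rule exI[of _ "Cn pf [pg]"]) (auto intro!: rf_eval.comp[where ys="[g xs]" for xs] pf pg)
qed

lemma rec_fn_comp2:
  assumes "rec_fn 2 f" "rec_fn k g" "rec_fn k h"
  shows "rec_fn k (\<lambda>xs. f [g xs, h xs])"
proof -
  obtain pf where pf: "\<And>xs. length xs = 2 \<Longrightarrow> rf_eval pf xs (f xs)"
    using assms(1) unfolding rec_fn_def by auto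
  obtain pg where pg: "\<And>xs. length xs = k \<Longrightarrow> rf_eval pg xs (g xs)"
    using assms(2) unfolding rec_fn_def by auto
  obtain ph where ph: "\<And>xs. length xs = k \<Longrightarrow> rf_eval ph xs (h xs)"
    using assms(3) unfolding rec_fn_def by auto
  show ?thesis unfolding rec_fn_def
    by (rule exI[of _ "Cn pf [pg, ph]"])
      (auto intro!: rf_eval.comp[where ys="[g xs, h xs]" for xs] pf pg ph)
qed

lemma rec_fn_cong: "rec_fn k f \<Longrightarrow> (\<And>xs. length xs = k \<Longrightarrow> f xs = g xs) \<Longrightarrow> rec_fn k g"
  unfolding rec_fn_def by metis

lemma rec_fn_funpow:
  assumes "rec_fn 1 (\<lambda>xs. F (hd xs))"
  shows "rec_fn 2 (\<lambda>xs. (F ^^ (xs ! 0)) (xs ! 1))"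
proof -
  obtain pF where pF: "\<And>xs. length xs = 1 \<Longrightarrow> rf_eval pF xs (F (hd xs))"
    using assms unfolding rec_fn_def by auto
  have "rf_eval (Pr (Pj 0) (Cn pF [Pj 0])) [n, x] ((F ^^ n) x)" for n x
  proof (induction n)
    case 0
    then show ?case using rf_eval.prim0[OF rf_eval.proj[of 0 "[x]"]] by simp
  next
    case (Suc n)
    have "rf_eval (Cn pF [Pj 0]) [(F ^^ n) x, n, x] (F ((F ^^ n) x))"
      by (rule rf_eval.comp[where ys="[(F ^^ n) x]"])
        (use pF[of "[(F ^^ n) x]"] in \<open>auto intro: rf_eval_projI\<close>)
    then show ?case using rf_eval.primS[OF Suc] by simp
  qed
  then show ?thesis unfolding rec_fn_def
    by (intro exI[of _ "Pr (Pj 0) (Cn pF [Pj 0])"]) (auto simp: length_Suc_conv numeral_2_eq_2)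
qed

lemma rec_fn_minimize:
  assumes "rec_fn (Suc k) f" "\<And>xs. length xs = k \<Longrightarrow> \<exists>n. f (n # xs) = 0"
  shows "rec_fn k (\<lambda>xs. LEAST n. f (n # xs) = 0)"
proof -
  obtain p where p: "\<And>xs. length xs = Suc k \<Longrightarrow> rf_eval p xs (f xs)"
    using assms(1) unfolding rec_fn_def by auto
  show ?thesis unfolding rec_fn_def
  proof (intro exI[of _ "Mn p"] allI impI)
    fix xs :: "nat list" assume l: "length xs = k"
    define n where "n = (LEAST n. f (n # xs) = 0)"
    have "f (n # xs) = 0" unfolding n_def by (rule LeastI_ex[OF assms(2)[OF l]])
    then have "rf_eval p (n # xs) 0" using p[of "n # xs"] l by simp
    moreover have "\<forall>m<n. \<exists>j. rf_eval p (m # xs) (Suc j)"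
    proof (intro allI impI)
      fix m assume "m < n"
      then have "f (m # xs) \<noteq> 0" unfolding n_def using not_less_Least by blast
      then obtain j where "f (m # xs) = Suc j" using not0_implies_Suc by blast
      then show "\<exists>j. rf_eval p (m # xs) (Suc j)" using p[of "m # xs"] l by auto
    qed
    ultimately show "rf_eval (Mn p) xs (LEAST n. f (n # xs) = 0)"
      unfolding n_def[symmetric] by (rule rf_eval.mu)
  qed
qed

definition rec1 :: "(nat \<Rightarrow> nat) \<Rightarrow> bool" where
  "rec1 F \<longleftrightarrow> rec_fn 1 (\<lambda>xs. F (hd xs))"

definition rec2 :: "(nat \<Rightarrow> nat \<Rightarrow> nat) \<Rightarrow> bool" where
  "rec2 F \<longleftrightarrow> rec_fn 2 (\<lambda>xs. F (xs ! 0) (xs ! 1))"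

lemma length_eq_1_iff: "length xs = Suc 0 \<longleftrightarrow> (\<exists>x. xs = [x])"
  by (cases xs) auto

lemma length_eq_2_iff: "length xs = 2 \<longleftrightarrow> (\<exists>x y. xs = [x, y])"
  by (auto simp: length_Suc_conv numeral_2_eq_2)

lemma recursive_fn_iff_rec1: "recursive_fn g \<longleftrightarrow> rec1 g"
  unfolding recursive_fn_def rec1_def rec_fn_def
  by (metis One_nat_def length_eq_1_iff list.sel(1) list.size(3,4))

lemma rec1_cong: "rec1 f \<Longrightarrow> (\<And>x. f x = g x) \<Longrightarrow> rec1 g"
  by (metis ext)

lemma rec1_id: "rec1 (\<lambda>x. x)"
  unfolding rec1_def by (rule rec_fn_cong[OF rec_fn_proj[of 0 1]]) (auto simp: length_eq_1_iff)

lemma rec1_comp: "rec1 f \<Longrightarrow> rec1 g \<Longrightarrow> rec1 (\<lambda>x. f (g x))"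
  unfolding rec1_def by (drule (1) rec_fn_comp1) (erule rec_fn_cong; auto simp: length_eq_1_iff)

lemma rec1_comp2: "rec2 f \<Longrightarrow> rec1 g \<Longrightarrow> rec1 h \<Longrightarrow> rec1 (\<lambda>x. f (g x) (h x))"
  unfolding rec1_def rec2_def
  by (drule (2) rec_fn_comp2) (erule rec_fn_cong; auto simp: length_eq_1_iff)

lemma rec2_comp1: "rec1 f \<Longrightarrow> rec2 g \<Longrightarrow> rec2 (\<lambda>a b. f (g a b))"
  unfolding rec1_def rec2_def
  by (drule (1) rec_fn_comp1) (erule rec_fn_cong; auto simp: length_eq_2_iff)

lemma rec2_comp2: "rec2 f \<Longrightarrow> rec2 g \<Longrightarrow> rec2 h \<Longrightarrow> rec2 (\<lambda>a b. f (g a b) (h a b))"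
  unfolding rec2_def
  by (drule (2) rec_fn_comp2) (erule rec_fn_cong; auto simp: length_eq_2_iff)

lemma rec2_fst: "rec2 (\<lambda>a b. a)"
  unfolding rec2_def by (rule rec_fn_proj) simp

lemma rec2_snd: "rec2 (\<lambda>a b. b)"
  unfolding rec2_def by (rule rec_fn_proj) simp

lemma rec1_Suc: "rec1 Suc"
  unfolding rec1_def by (rule rec_fn_succ)

lemma rec1_const: "rec1 (\<lambda>_. c)"
proof (induction c)
  case 0
  then show ?case unfolding rec1_def by (rule rec_fn_zero)
next
  case (Suc c)
  then show ?case using rec1_comp[OF rec1_Suc] by blast
qed

lemma rec2_funpow: "rec1 F \<Longrightarrow> rec2 (\<lambda>n x. (F ^^ n) x)"
  unfolding rec1_def rec2_def by (rule rec_fn_funpow)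

lemma rec2_add: "rec2 (+)"
proof -
  have "rec2 (\<lambda>n x. (Suc ^^ n) x)" by (rule rec2_funpow[OF rec1_Suc])
  then show ?thesis by simp
qed

lemma rec1_pred: "rec1 (\<lambda>n. n - 1)"
proof -
  have pred: "rf_eval (Pr Zr (Pj 1)) [n] (n - 1)" for n
  proof (induction n)
    case 0
    then show ?case using rf_eval.prim0[OF rf_eval.zero[of "[]"]] by simp
  next
    case (Suc n)
    show ?case using rf_eval.primS[OF Suc rf_eval_projI[of 1 "[n - 1, n]" n]] by simp
  qed
  show ?thesis unfolding rec1_def rec_fn_def
    using pred by (metis One_nat_def length_eq_1_iff list.sel(1))
qed

lemma rec2_diff: "rec2 (-)"
proof -
  have "((\<lambda>n. n - 1) ^^ n) x = x - n" for n x :: nat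
    by (induction n arbitrary: x) (auto simp del: funpow.simps simp: funpow_Suc_right)
  then have "rec2 (\<lambda>n x. x - n)" using rec2_funpow[OF rec1_pred] by simp
  from rec2_comp2[OF this rec2_snd rec2_fst] show ?thesis by simp
qed

lemma rec2_mult: "rec2 (*)"
proof -
  obtain pa where pa: "\<And>xs. length xs = 2 \<Longrightarrow> rf_eval pa xs (xs ! 0 + xs ! 1)"
    using rec2_add unfolding rec2_def rec_fn_def by auto
  have mult: "rf_eval (Pr Zr (Cn pa [Pj 0, Pj 2])) [n, x] (n * x)" for n x
  proof (induction n)
    case 0
    then show ?case using rf_eval.prim0[OF rf_eval.zero[of "[x]"]] by simp
  next
    case (Suc n)
    have "rf_eval (Cn pa [Pj 0, Pj 2]) [n * x, n, x] (n * x + x)"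
      by (rule rf_eval.comp[where ys="[n * x, x]"])
        (use pa[of "[n * x, x]"] in \<open>auto intro: rf_eval_projI\<close>)
    then show ?case using rf_eval.primS[OF Suc] by (simp add: add.commute)
  qed
  show ?thesis unfolding rec2_def rec_fn_def
    by (rule exI[of _ "Pr Zr (Cn pa [Pj 0, Pj 2])"]) (auto simp: length_eq_2_iff mult)
qed

lemma rec1_triangle: "rec1 triangle"
proof -
  obtain pa where pa: "\<And>xs. length xs = 2 \<Longrightarrow> rf_eval pa xs (xs ! 0 + xs ! 1)"
    using rec2_add unfolding rec2_def rec_fn_def by auto
  let ?p = "Pr Zr (Cn pa [Pj 0, Cn Sc [Pj 1]])"
  have tri: "rf_eval ?p [n] (triangle n)" for n
  proof (induction n)
    case 0
    then show ?case using rf_eval.prim0[OF rf_eval.zero[of "[]"]] by simp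
  next
    case (Suc n)
    have "rf_eval (Cn Sc [Pj 1]) [triangle n, n] (Suc n)"
      by (rule rf_eval.comp[where ys="[n]"]) (auto intro: rf_eval_projI rf_eval.succ)
    then have "rf_eval (Cn pa [Pj 0, Cn Sc [Pj 1]]) [triangle n, n] (triangle n + Suc n)"
      by (intro rf_eval.comp[where ys="[triangle n, Suc n]"])
        (use pa[of "[triangle n, Suc n]"] in \<open>auto intro: rf_eval_projI\<close>)
    then show ?case using rf_eval.primS[OF Suc] by (simp add: add.commute)
  qed
  show ?thesis unfolding rec1_def rec_fn_def
    using tri by (metis One_nat_def length_eq_1_iff list.sel(1))
qed

lemma rec2_prod_encode: "rec2 (\<lambda>a b. prod_encode (a, b))"
proof -
  have "rec2 (\<lambda>a b. triangle (a + b))" by (rule rec2_comp1[OF rec1_triangle rec2_add])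
  from rec2_comp2[OF rec2_add this rec2_fst] show ?thesis by (simp add: prod_encode_def)
qed

lemma rec1_minimize:
  assumes "rec2 f" "\<And>x. \<exists>n. f n x = 0"
  shows "rec1 (\<lambda>x. LEAST n. f n x = 0)"
proof -
  have "rec_fn 2 (\<lambda>ys. f (hd ys) (hd (tl ys)))"
    using assms(1) unfolding rec2_def by (rule rec_fn_cong) (auto simp: length_eq_2_iff)
  from rec_fn_minimize[OF this[folded Suc_1]] assms(2) show ?thesis unfolding rec1_def by simp
qed

lemma rec1_add: "rec1 f \<Longrightarrow> rec1 g \<Longrightarrow> rec1 (\<lambda>x. f x + g x)"
  by (rule rec1_comp2[OF rec2_add])

lemma rec1_diff: "rec1 f \<Longrightarrow> rec1 g \<Longrightarrow> rec1 (\<lambda>x. f x - g x)"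
  by (rule rec1_comp2[OF rec2_diff])

lemma rec1_mult: "rec1 f \<Longrightarrow> rec1 g \<Longrightarrow> rec1 (\<lambda>x. f x * g x)"
  by (rule rec1_comp2[OF rec2_mult])

lemma rec1_prod_encode: "rec1 f \<Longrightarrow> rec1 g \<Longrightarrow> rec1 (\<lambda>x. prod_encode (f x, g x))"
  by (rule rec1_comp2[OF rec2_prod_encode])

lemma rec1_funpow: "rec1 F \<Longrightarrow> rec1 a \<Longrightarrow> rec1 b \<Longrightarrow> rec1 (\<lambda>x. (F ^^ a x) (b x))"
  by (rule rec1_comp2[OF rec2_funpow])

definition unpair_fst :: "nat \<Rightarrow> nat" where
  "unpair_fst m = fst (prod_decode m)"

definition unpair_snd :: "nat \<Rightarrow> nat" where
  "unpair_snd m = snd (prod_decode m)"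

lemma unpair_fst_prod_encode [simp]: "unpair_fst (prod_encode (a, b)) = a"
  by (simp add: unpair_fst_def)

lemma unpair_snd_prod_encode [simp]: "unpair_snd (prod_encode (a, b)) = b"
  by (simp add: unpair_snd_def)

lemma prod_decode_triangle_root:
  fixes m :: nat
  defines "s \<equiv> LEAST s. m < triangle (Suc s)"
  shows "prod_decode m = (m - triangle s, s - (m - triangle s))"
proof -
  have s_upper: "m < triangle (Suc s)" unfolding s_def by (rule LeastI[of _ m]) simp
  have s_lower: "triangle s \<le> m"
  proof (cases s)
    case (Suc s')
    then have "\<not> m < triangle (Suc s')" unfolding s_def by (metis lessI not_less_Least)
    then show ?thesis using Suc by simp
  qed simp
  have "prod_encode (m - triangle s, s - (m - triangle s)) = m"
    using s_upper s_lower by (simp add: prod_encode_def)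
  then show ?thesis by (metis prod_encode_inverse)
qed

lemma rec1_triangle_root: "rec1 (\<lambda>m. LEAST s. m < triangle (Suc s))"
proof -
  have "rec2 (\<lambda>s m. Suc m - triangle (Suc s))"
    by (rule rec2_comp2[OF rec2_diff rec2_comp1[OF rec1_Suc rec2_snd]
          rec2_comp1[OF rec1_comp[OF rec1_triangle rec1_Suc] rec2_fst]])
  from rec1_minimize[OF this] have "rec1 (\<lambda>m. LEAST s. Suc m - triangle (Suc s) = 0)"
    by (metis diff_is_0_eq lessI triangle_Suc le_add2 le_trans less_imp_le_nat)
  then show ?thesis by (simp add: less_Suc_eq_le)
qed

lemma rec1_unpair_fst: "rec1 unpair_fst"
proof -
  have "rec1 (\<lambda>m. m - triangle (LEAST s. m < triangle (Suc s)))"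
    by (rule rec1_diff[OF rec1_id rec1_comp[OF rec1_triangle rec1_triangle_root]])
  then show ?thesis unfolding unpair_fst_def prod_decode_triangle_root by simp
qed

lemma rec1_unpair_snd: "rec1 unpair_snd"
proof -
  have "rec1 (\<lambda>m. (LEAST s. m < triangle (Suc s)) - (m - triangle (LEAST s. m < triangle (Suc s))))"
    by (rule rec1_diff[OF rec1_triangle_root rec1_diff[OF rec1_id
          rec1_comp[OF rec1_triangle rec1_triangle_root]]])
  then show ?thesis unfolding unpair_snd_def prod_decode_triangle_root by simp
qed

definition rec_pred :: "(nat \<Rightarrow> bool) \<Rightarrow> bool" where
  "rec_pred Q \<longleftrightarrow> rec1 (\<lambda>x. of_bool (Q x))"

lemma rec_pred_cong:
  assumes "rec_pred P" "\<And>x. P x = Q x"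
  shows "rec_pred Q"
proof -
  have "P = Q" using assms(2) by blast
  then show ?thesis using assms(1) by simp
qed

lemma rec_pred_const: "rec_pred (\<lambda>_. b)"
  unfolding rec_pred_def by (rule rec1_const)

lemma rec_pred_comp: "rec_pred P \<Longrightarrow> rec1 f \<Longrightarrow> rec_pred (\<lambda>x. P (f x))"
  unfolding rec_pred_def by (rule rec1_comp)

lemma rec_pred_le:
  assumes "rec1 f" "rec1 g"
  shows "rec_pred (\<lambda>x. f x \<le> g x)"
proof -
  have "rec1 (\<lambda>x. 1 - (f x - g x))" by (intro rec1_diff rec1_const assms)
  then show ?thesis unfolding rec_pred_def by (rule rec1_cong) simp
qed

lemma rec_pred_not:
  assumes "rec_pred P"
  shows "rec_pred (\<lambda>x. \<not> P x)"
proof -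
  have "rec1 (\<lambda>x. 1 - of_bool (P x))"
    using assms unfolding rec_pred_def by (intro rec1_diff rec1_const)
  then show ?thesis unfolding rec_pred_def by (rule rec1_cong) simp
qed

lemma rec_pred_conj:
  assumes "rec_pred P" "rec_pred Q"
  shows "rec_pred (\<lambda>x. P x \<and> Q x)"
proof -
  have "rec1 (\<lambda>x. of_bool (P x) * of_bool (Q x))"
    using assms unfolding rec_pred_def by (intro rec1_mult)
  then show ?thesis unfolding rec_pred_def by (rule rec1_cong) simp
qed

lemma rec_pred_disj: "rec_pred P \<Longrightarrow> rec_pred Q \<Longrightarrow> rec_pred (\<lambda>x. P x \<or> Q x)"
  using rec_pred_not[OF rec_pred_conj[OF rec_pred_not rec_pred_not]] by simp

lemma rec_pred_less: "rec1 f \<Longrightarrow> rec1 g \<Longrightarrow> rec_pred (\<lambda>x. f x < g x)"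
  using rec_pred_not[OF rec_pred_le, of g f] by (simp add: not_le)

lemma rec_pred_eq: "rec1 f \<Longrightarrow> rec1 g \<Longrightarrow> rec_pred (\<lambda>x. f x = g x)"
  using rec_pred_conj[OF rec_pred_le rec_pred_le, of f g g f] by (simp add: order_eq_iff)

lemma rec1_If:
  assumes "rec_pred P" "rec1 a" "rec1 b"
  shows "rec1 (\<lambda>x. if P x then a x else b x)"
proof -
  have P: "rec1 (\<lambda>x. of_bool (P x))" using assms(1) unfolding rec_pred_def .
  have "rec1 (\<lambda>x. a x * of_bool (P x) + b x * (1 - of_bool (P x)))"
    by (intro rec1_add rec1_mult rec1_diff assms(2,3) P rec1_const)
  then show ?thesis by (rule rec1_cong) simp
qed

lemma rec1_Least:
  assumes "rec_pred (\<lambda>z. P (unpair_fst z) (unpair_snd z))" "\<And>x. \<exists>n. P n x"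
  shows "rec1 (\<lambda>x. LEAST n. P n x)"
proof -
  have "rec1 (\<lambda>z. 1 - of_bool (P (unpair_fst z) (unpair_snd z)))"
    using assms(1) unfolding rec_pred_def by (rule rec1_diff[OF rec1_const])
  from rec2_comp1[OF this rec2_prod_encode] have "rec2 (\<lambda>n x. 1 - of_bool (P n x))"
    by simp
  then have "rec1 (\<lambda>x. LEAST n. 1 - of_bool (P n x) = (0::nat))"
    by (rule rec1_minimize) (use assms(2) in simp)
  moreover have "(\<lambda>n. 1 - of_bool (P n x) = (0::nat)) = (\<lambda>n. P n x)" for x
    by auto
  ultimately show ?thesis by (simp only:)
qed

lemma div_eq_Least: "0 < b \<Longrightarrow> a div b = (LEAST q. a < b * Suc q \<or> a \<le> q)" for a b :: nat
proof (rule Least_equality[symmetric])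
  assume "0 < b"
  then have "a mod b < b" by simp
  moreover have "b * (a div b) + a mod b = a" by (rule mult_div_mod_eq)
  ultimately have "a < b * Suc (a div b)" by (simp only: mult_Suc_right)
  then show "a < b * Suc (a div b) \<or> a \<le> a div b" ..
  fix y assume "a < b * Suc y \<or> a \<le> y"
  then show "a div b \<le> y"
  proof
    assume "a < b * Suc y"
    then have "a div b < Suc y" by (simp add: less_mult_imp_div_less mult.commute)
    then show ?thesis by simp
  next
    assume "a \<le> y"
    then show ?thesis using div_le_dividend[of a b] by linarith
  qed
qed

lemma rec1_div:
  assumes "rec1 f" "rec1 g"
  shows "rec1 (\<lambda>x. f x div g x)"
proof -
  let ?a = "\<lambda>z. unpair_fst (unpair_snd z)" and ?b = "\<lambda>z. unpair_snd (unpair_snd z)"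
  have "rec_pred (\<lambda>z. ?a z < ?b z * Suc (unpair_fst z) \<or> ?a z \<le> unpair_fst z)"
    by (intro rec_pred_disj rec_pred_less rec_pred_le rec1_mult rec1_comp[OF rec1_Suc]
        rec1_comp[OF rec1_unpair_fst] rec1_comp[OF rec1_unpair_snd] rec1_unpair_fst rec1_unpair_snd)
  then have "rec1 (\<lambda>x. LEAST q. unpair_fst x < unpair_snd x * Suc q \<or> unpair_fst x \<le> q)"
    by (rule rec1_Least) blast
  then have "rec1 (\<lambda>x. if unpair_snd x = 0 then 0
      else LEAST q. unpair_fst x < unpair_snd x * Suc q \<or> unpair_fst x \<le> q)"
    by (intro rec1_If rec_pred_eq rec1_unpair_snd rec1_const)
  then have "rec1 (\<lambda>x. unpair_fst x div unpair_snd x)"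
    by (rule rec1_cong) (simp add: div_eq_Least)
  from rec1_comp[OF this rec1_prod_encode[OF assms]] show ?thesis by simp
qed

lemma rec_pred_even:
  assumes f: "rec1 f"
  shows "rec_pred (\<lambda>x. even (f x))"
proof -
  have "rec_pred (\<lambda>x. 2 * (f x div 2) = f x)"
    by (intro rec_pred_eq rec1_mult rec1_div f rec1_const)
  then show ?thesis by (rule rec_pred_cong) (metis dvd_mult_div_cancel dvd_triv_left)
qed

definition code_tl :: "nat \<Rightarrow> nat" where
  "code_tl c = unpair_snd (c - 1)"

definition code_hd :: "nat \<Rightarrow> nat" where
  "code_hd c = unpair_fst (c - 1)"

lemma code_tl_Suc_prod_encode [simp]: "code_tl (Suc (prod_encode (x, c))) = c"
  by (simp add: code_tl_def)

lemma code_hd_Suc_prod_encode [simp]: "code_hd (Suc (prod_encode (x, c))) = x"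
  by (simp add: code_hd_def)

lemma code_tl_list_encode [simp]: "code_tl (list_encode xs) = list_encode (tl xs)"
proof (cases xs)
  case Nil
  have "prod_decode 0 = (0, 0)" by (simp add: prod_decode_def prod_decode_aux.simps)
  then show ?thesis using Nil by (simp add: code_tl_def unpair_snd_def)
qed simp

lemma rec1_code_tl: "rec1 code_tl"
  unfolding code_tl_def by (rule rec1_comp[OF rec1_unpair_snd rec1_pred])

lemma rec1_code_hd: "rec1 code_hd"
  unfolding code_hd_def by (rule rec1_comp[OF rec1_unpair_fst rec1_pred])

lemma funpow_code_tl: "(code_tl ^^ k) (list_encode xs) = list_encode (drop k xs)"
  by (induction k) (auto simp: drop_Suc tl_drop)

definition code_length :: "nat \<Rightarrow> nat" where
  "code_length c = (LEAST k. (code_tl ^^ k) c = 0)"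

lemma code_length_list_encode [simp]: "code_length (list_encode xs) = length xs"
proof -
  have "list_encode ys = 0 \<longleftrightarrow> ys = []" for ys by (cases ys) auto
  then show ?thesis unfolding code_length_def funpow_code_tl by (intro Least_equality) auto
qed

lemma rec1_code_length: "rec1 code_length"
  unfolding code_length_def
proof (rule rec1_Least)
  show "rec_pred (\<lambda>z. (code_tl ^^ unpair_fst z) (unpair_snd z) = 0)"
    by (rule rec_pred_eq[OF rec1_funpow[OF rec1_code_tl rec1_unpair_fst rec1_unpair_snd] rec1_const])
  fix c :: nat
  obtain xs where "c = list_encode xs" by (metis list_decode_inverse)
  then show "\<exists>k. (code_tl ^^ k) c = 0" using funpow_code_tl[of "length xs" xs] by auto
qed

definition code_rev_step :: "nat \<Rightarrow> nat" where
  "code_rev_step z = prod_encode (code_tl (unpair_fst z),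
      Suc (prod_encode (code_hd (unpair_fst z), unpair_snd z)))"

lemma funpow_code_rev_step:
  "k \<le> length xs \<Longrightarrow> (code_rev_step ^^ k) (prod_encode (list_encode xs, list_encode acc)) =
    prod_encode (list_encode (drop k xs), list_encode (rev (take k xs) @ acc))"
proof (induction k)
  case (Suc k)
  then have "drop k xs = xs ! k # drop (Suc k) xs" "take (Suc k) xs = take k xs @ [xs ! k]"
    by (simp_all add: Cons_nth_drop_Suc take_Suc_conv_app_nth)
  with Suc show ?case by (simp add: code_rev_step_def)
qed simp

definition code_rev :: "nat \<Rightarrow> nat" where
  "code_rev c = unpair_snd ((code_rev_step ^^ code_length c) (prod_encode (c, 0)))"

lemma code_rev_list_encode [simp]: "code_rev (list_encode xs) = list_encode (rev xs)"
  using funpow_code_rev_step[of "length xs" xs "[]"] by (simp add: code_rev_def)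

lemma rec1_code_rev: "rec1 code_rev"
  unfolding code_rev_def
  by (rule rec1_comp[OF rec1_unpair_snd rec1_funpow[OF _ rec1_code_length
        rec1_prod_encode[OF rec1_id rec1_const]]])
    (unfold code_rev_step_def, intro rec1_prod_encode rec1_comp[OF rec1_Suc] rec1_comp[OF rec1_code_tl]
      rec1_comp[OF rec1_code_hd] rec1_unpair_fst rec1_unpair_snd)

definition code_take :: "nat \<Rightarrow> nat \<Rightarrow> nat" where
  "code_take m c = code_rev ((code_tl ^^ (code_length c - m)) (code_rev c))"

lemma code_take_list_encode [simp]: "code_take m (list_encode xs) = list_encode (take m xs)"
  by (cases "m \<le> length xs") (simp_all add: code_take_def funpow_code_tl rev_drop)

lemma rec1_code_take:
  assumes "rec1 m" "rec1 c"
  shows "rec1 (\<lambda>x. code_take (m x) (c x))"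
  unfolding code_take_def
  by (rule rec1_comp[OF rec1_code_rev rec1_funpow[OF rec1_code_tl rec1_diff]])
    (rule rec1_comp[OF rec1_code_length assms(2)], rule assms(1),
      rule rec1_comp[OF rec1_code_rev assms(2)])

definition decidable_on :: "('d \<Rightarrow> nat) \<Rightarrow> ('d \<Rightarrow> bool) \<Rightarrow> bool" where
  "decidable_on enc P \<longleftrightarrow> (\<exists>Q. rec_pred Q \<and> (\<forall>d. Q (enc d) = P d))"

definition recursive_map :: "('d \<Rightarrow> nat) \<Rightarrow> ('e \<Rightarrow> nat) \<Rightarrow> ('d \<Rightarrow> 'e) \<Rightarrow> bool" where
  "recursive_map enc enc' h \<longleftrightarrow> (\<exists>H. rec1 H \<and> (\<forall>d. H (enc d) = enc' (h d)))"

lemma decidable_on_const: "decidable_on enc (\<lambda>_. b)"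
  unfolding decidable_on_def using rec_pred_const by blast

lemma decidable_on_not: "decidable_on enc P \<Longrightarrow> decidable_on enc (\<lambda>d. \<not> P d)"
  unfolding decidable_on_def using rec_pred_not by fastforce

lemma decidable_on_conj:
  "decidable_on enc P \<Longrightarrow> decidable_on enc Q \<Longrightarrow> decidable_on enc (\<lambda>d. P d \<and> Q d)"
  unfolding decidable_on_def using rec_pred_conj by fastforce

lemma decidable_on_comp:
  assumes "decidable_on enc' P" "recursive_map enc enc' h"
  shows "decidable_on enc (\<lambda>d. P (h d))"
  using assms rec_pred_comp unfolding decidable_on_def recursive_map_def by fastforce

lemma int_encode_eq: "int_encode n = (if 0 \<le> n then 2 * nat n else Suc (2 * nat (- n - 1)))"
  by (simp add: int_encode_def sum_encode_def)

lemma even_int_encode_iff: "even (int_encode n) \<longleftrightarrow> 0 \<le> n"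
  by (simp add: int_encode_eq)

lemma int_encode_div_2_nonneg: "0 \<le> n \<Longrightarrow> int_encode n div 2 = nat n"
  by (simp add: int_encode_eq)

lemma Suc_int_encode_div_2: "Suc (int_encode n) div 2 = nat \<bar>n\<bar>"
  by (simp add: int_encode_eq Suc_nat_eq_nat_zadd1)

lemma int_encode_double_div_2: "int_encode (2 * k) div 2 = int_encode k"
proof (cases "0 \<le> k")
  case False
  define m where "m = nat (- k - 1)"
  have k: "k = - int m - 1" using False by (simp add: m_def)
  show ?thesis unfolding k by (simp add: int_encode_eq nat_add_distrib)
qed (simp add: int_encode_eq nat_mult_distrib)

lemma enc_rat_eq: "quotient_of q = (n, d) \<Longrightarrow> enc_rat q = prod_encode (int_encode n, nat d)"
  by (simp add: enc_rat_def)

lemma inj_enc_rat: "inj enc_rat"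
proof (rule injI)
  fix q r assume "enc_rat q = enc_rat r"
  then have "quotient_of q = quotient_of r"
    using quotient_of_denom_pos' [of q] quotient_of_denom_pos' [of r]
    by (auto simp: enc_rat_def prod_eq_iff inj_int_encode[THEN inj_eq])
  then show "q = r" by (simp add: quotient_of_inject_eq)
qed

lemma quotient_of_coprime_eq:
  "0 < d \<Longrightarrow> coprime n d \<Longrightarrow> quotient_of (of_int n / of_int d) = (n, d)"
  by (simp add: Fract_of_int_quotient[symmetric] quotient_of_Fract)

text \<open>Halving keeps the quotient reduced without a gcd computation: an even numerator is
  halved, and an odd one stays coprime to the doubled denominator.\<close>

definition rat_code_half :: "nat \<Rightarrow> nat" where
  "rat_code_half c = (if even (Suc (unpair_fst c) div 2)
     then prod_encode (unpair_fst c div 2, unpair_snd c)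
     else prod_encode (unpair_fst c, 2 * unpair_snd c))"

lemma rat_code_half_enc_rat: "rat_code_half (enc_rat q) = enc_rat (q / 2)"
proof -
  obtain n d where nd: "quotient_of q = (n, d)" by fastforce
  have d: "0 < d" and cop: "coprime n d"
    using quotient_of_denom_pos[OF nd] quotient_of_coprime[OF nd] by auto
  have q: "q = of_int n / of_int d" using quotient_of_div[OF nd] .
  show ?thesis
  proof (cases "even n")
    case True
    then obtain k where k: "n = 2 * k" by blast
    have "quotient_of (q / 2) = (k, d)"
      using d cop by (simp add: q k quotient_of_coprime_eq)
    then show ?thesis using True
      by (simp add: rat_code_half_def enc_rat_eq[OF nd] Suc_int_encode_div_2 k int_encode_double_div_2 enc_rat_eq)
  next
    case False
    have "coprime n (2 * d)" using cop False by simp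
    then have "quotient_of (of_int n / of_int (2 * d)) = (n, 2 * d)"
      using d by (intro quotient_of_coprime_eq) simp_all
    then have "quotient_of (q / 2) = (n, 2 * d)" by (simp add: q field_simps)
    then show ?thesis using False
      by (simp add: rat_code_half_def enc_rat_eq[OF nd] Suc_int_encode_div_2 enc_rat_eq nat_mult_distrib)
  qed
qed

lemma recursive_map_divide_pow2: "recursive_map enc_rat enc_rat (\<lambda>q. q / 2 ^ j)"
proof -
  have "rec1 rat_code_half"
    unfolding rat_code_half_def
    by (intro rec1_If rec_pred_even rec1_div rec1_comp[OF rec1_Suc] rec1_prod_encode rec1_mult
        rec1_unpair_fst rec1_unpair_snd rec1_const)
  then have "rec1 (rat_code_half ^^ j)"
    using rec1_funpow[OF _ rec1_const rec1_id] by (simp add: rec1_cong)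
  moreover have "(rat_code_half ^^ j) (enc_rat q) = enc_rat (q / 2 ^ j)" for q
    by (induction j) (simp_all add: rat_code_half_enc_rat field_simps)
  ultimately show ?thesis unfolding recursive_map_def by blast
qed

text \<open>Positive thresholds suffice below, and they spare us integer arithmetic on codes.\<close>

lemma decidable_on_rat_greater:
  fixes a :: rat
  assumes "0 < a"
  shows "decidable_on enc_rat (\<lambda>q. a < q)"
proof -
  obtain a1 a2 where aq: "quotient_of a = (a1, a2)" by fastforce
  have a2: "0 < a2" using quotient_of_denom_pos[OF aq] .
  have a_eq: "a = of_int a1 / of_int a2" using quotient_of_div[OF aq] .
  have a1: "0 < a1" using assms a2 by (simp add: a_eq zero_less_divide_iff)
  define Q where
    "Q c \<longleftrightarrow> even (unpair_fst c) \<and> nat a1 * unpair_snd c < (unpair_fst c div 2) * nat a2" for c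
  have "rec_pred Q" unfolding Q_def
    by (intro rec_pred_conj rec_pred_even rec_pred_less rec1_mult rec1_div rec1_unpair_fst
        rec1_unpair_snd rec1_const)
  moreover have "Q (enc_rat q) \<longleftrightarrow> a < q" for q
  proof -
    obtain n d where nd: "quotient_of q = (n, d)" by fastforce
    have d: "0 < d" using quotient_of_denom_pos[OF nd] .
    have "a < q \<longleftrightarrow> of_int a1 / of_int a2 < (of_int n / of_int d :: rat)"
      by (simp add: a_eq quotient_of_div[OF nd])
    also have "\<dots> \<longleftrightarrow> a1 * d < n * a2"
      using a2 d by (simp add: divide_less_eq less_divide_eq of_int_mult[symmetric] del: of_int_mult)
    finally have "a < q \<longleftrightarrow> a1 * d < n * a2" .
    moreover have "a1 * d < n * a2 \<longleftrightarrow> 0 \<le> n \<and> nat a1 * nat d < nat n * nat a2"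
    proof (cases "0 \<le> n")
      case True
      have "nat a1 * nat d = nat (a1 * d)" "nat n * nat a2 = nat (n * a2)"
        using True a1 a2 d by (simp_all add: nat_mult_distrib)
      moreover have "0 \<le> a1 * d" using a1 d by simp
      ultimately show ?thesis using True by (auto simp: nat_less_eq_zless)
    next
      case False
      then have "n * a2 < 0" using a2 by (simp add: mult_neg_pos)
      moreover have "0 < a1 * d" using a1 d by simp
      ultimately show ?thesis using False by linarith
    qed
    ultimately show ?thesis
      unfolding Q_def enc_rat_eq[OF nd] by (auto simp: even_int_encode_iff int_encode_div_2_nonneg)
  qed
  ultimately show ?thesis unfolding decidable_on_def by blast
qed

lemma decidable_on_rat_eq: "decidable_on enc_rat (\<lambda>q. q = a)"
  unfolding decidable_on_def
  by (intro exI[of _ "\<lambda>c. c = enc_rat a"] conjI rec_pred_eq rec1_id rec1_const)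
    (simp add: inj_enc_rat[THEN inj_eq])

lemma decidable_on_rat_less:
  fixes a :: rat
  assumes "0 < a"
  shows "decidable_on enc_rat (\<lambda>q. q < a)"
proof -
  have "decidable_on enc_rat (\<lambda>q. \<not> a < q \<and> \<not> q = a)"
    by (intro decidable_on_conj decidable_on_not decidable_on_rat_greater assms decidable_on_rat_eq)
  moreover have "(\<lambda>q. \<not> a < q \<and> \<not> q = a) = (\<lambda>q. q < a)" by fastforce
  ultimately show ?thesis by simp
qed

lemma recursive_rat_mapE:
  assumes "recursive_rat_map enc q"
  obtains G where "rec1 G" "\<And>d n. G (prod_encode (enc d, n)) = enc_rat (q d n)"
  using assms unfolding recursive_rat_map_def recursive_fn_iff_rec1 by blast

lemma recursive_rat_mapI:
  "rec1 G \<Longrightarrow> (\<And>d n. G (prod_encode (enc d, n)) = enc_rat (q d n)) \<Longrightarrow> recursive_rat_map enc q"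
  unfolding recursive_rat_map_def recursive_fn_iff_rec1 by blast

lemma recursive_rat_map_reindex:
  assumes "recursive_map enc enc' h" "recursive_rat_map enc' q"
  shows "recursive_rat_map enc (\<lambda>d. q (h d))"
proof -
  obtain H where H: "rec1 H" "\<And>d. H (enc d) = enc' (h d)"
    using assms(1) unfolding recursive_map_def by blast
  obtain G where G: "rec1 G" "\<And>d n. G (prod_encode (enc' d, n)) = enc_rat (q d n)"
    using recursive_rat_mapE[OF assms(2)] by blast
  show ?thesis
    by (rule recursive_rat_mapI[where G = "\<lambda>z. G (prod_encode (H (unpair_fst z), unpair_snd z))"])
      (simp_all add: H G rec1_comp[OF G(1)] rec1_prod_encode rec1_comp[OF H(1)] rec1_unpair_fst
        rec1_unpair_snd)
qed

lemma recursive_rat_map_If: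
  assumes "decidable_on enc P" "recursive_rat_map enc q"
  shows "recursive_rat_map enc (\<lambda>d n. if P d then q d n else c)"
proof -
  obtain Q where Q: "rec_pred Q" "\<And>d. Q (enc d) = P d"
    using assms(1) unfolding decidable_on_def by blast
  obtain G where G: "rec1 G" "\<And>d n. G (prod_encode (enc d, n)) = enc_rat (q d n)"
    using recursive_rat_mapE[OF assms(2)] by blast
  show ?thesis
    by (rule recursive_rat_mapI[where G = "\<lambda>z. if Q (unpair_fst z) then G z else enc_rat c"])
      (simp_all add: Q G rec1_If rec_pred_comp rec1_unpair_fst rec1_const)
qed

lemma recursive_rat_map_divide_pow2:
  assumes "recursive_rat_map enc q"
  shows "recursive_rat_map enc (\<lambda>d n. q d n / 2 ^ j)"
proof -
  obtain G where G: "rec1 G" "\<And>d n. G (prod_encode (enc d, n)) = enc_rat (q d n)"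
    using recursive_rat_mapE[OF assms] by blast
  obtain H where H: "rec1 H" "\<And>q. H (enc_rat q) = enc_rat (q / 2 ^ j)"
    using recursive_map_divide_pow2[of j] unfolding recursive_map_def by blast
  show ?thesis
    by (rule recursive_rat_mapI[where G = "\<lambda>z. H (G z)"]) (simp_all add: rec1_comp G H)
qed

lemma computable_real_reindex:
  assumes "recursive_map enc enc' h" "computable_real enc' T"
  shows "computable_real enc (\<lambda>d. T (h d))"
  using assms recursive_rat_map_reindex unfolding computable_real_def by blast

lemma lsc_real_reindex:
  assumes "recursive_map enc enc' h" "lsc_real enc' T"
  shows "lsc_real enc (\<lambda>d. T (h d))"
  using assms recursive_rat_map_reindex unfolding lsc_real_def by blast

lemma computable_real_If:
  assumes "decidable_on enc P" "computable_real enc T"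
  shows "computable_real enc (\<lambda>d. if P d then T d else 1)"
proof -
  obtain q where "recursive_rat_map enc q" "\<And>d n. \<bar>T d - of_rat (q d n)\<bar> < (1/2) ^ n"
    using assms(2) unfolding computable_real_def by blast
  then show ?thesis unfolding computable_real_def
    by (intro exI[of _ "\<lambda>d n. if P d then q d n else 1"] conjI recursive_rat_map_If[OF assms(1)])
      auto
qed

lemma lsc_real_If:
  assumes "decidable_on enc P" "lsc_real enc T"
  shows "lsc_real enc (\<lambda>d. if P d then T d else 1)"
proof -
  obtain q where "recursive_rat_map enc q" "\<And>d n. q d n \<le> q d (Suc n)"
    "\<And>d. (\<lambda>n. real_of_rat (q d n)) \<longlonglongrightarrow> T d"
    using assms(2) unfolding lsc_real_def by blast
  then show ?thesis unfolding lsc_real_def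
    by (intro exI[of _ "\<lambda>d n. if P d then q d n else 1"] conjI recursive_rat_map_If[OF assms(1)])
      auto
qed

lemma computable_real_divide_pow2:
  assumes "computable_real enc T"
  shows "computable_real enc (\<lambda>d. T d / 2 ^ j)"
proof -
  obtain q where q: "recursive_rat_map enc q" "\<And>d n. \<bar>T d - of_rat (q d n)\<bar> < (1/2) ^ n"
    using assms unfolding computable_real_def by blast
  have "\<bar>T d / 2 ^ j - of_rat (q d n / 2 ^ j)\<bar> < (1/2) ^ n" for d n
  proof -
    have "\<bar>T d / 2 ^ j - of_rat (q d n / 2 ^ j)\<bar> = \<bar>T d - of_rat (q d n)\<bar> / 2 ^ j"
      by (simp add: of_rat_divide of_rat_power diff_divide_distrib[symmetric] abs_divide)
    also have "\<dots> \<le> \<bar>T d - of_rat (q d n)\<bar>"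
      by (simp add: divide_le_eq mult_le_cancel_left1)
    finally show ?thesis using q(2)[of d n] by linarith
  qed
  then show ?thesis unfolding computable_real_def
    by (intro exI[of _ "\<lambda>d n. q d n / 2 ^ j"] conjI recursive_rat_map_divide_pow2 q(1)) auto
qed

lemma lsc_real_divide_pow2:
  assumes "lsc_real enc T"
  shows "lsc_real enc (\<lambda>d. T d / 2 ^ j)"
proof -
  obtain q where q: "recursive_rat_map enc q" "\<And>d n. q d n \<le> q d (Suc n)"
    "\<And>d. (\<lambda>n. real_of_rat (q d n)) \<longlonglongrightarrow> T d"
    using assms unfolding lsc_real_def by blast
  have "(\<lambda>n. real_of_rat (q d n / 2 ^ j)) \<longlonglongrightarrow> T d / 2 ^ j" for d
    using tendsto_divide[OF q(3) tendsto_const, of "2 ^ j"] by (simp add: of_rat_divide of_rat_power)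
  then show ?thesis unfolding lsc_real_def using q(2)
    by (intro exI[of _ "\<lambda>d n. q d n / 2 ^ j"] conjI recursive_rat_map_divide_pow2 q(1))
      (auto simp: divide_right_mono)
qed

section \<open>Stopping a process when a predicate fails\<close>

definition holds_since :: "nat \<Rightarrow> (bool list \<Rightarrow> bool) \<Rightarrow> bool list \<Rightarrow> bool" where
  "holds_since N P s \<longleftrightarrow> (\<forall>m. N \<le> m \<and> m \<le> length s \<longrightarrow> P (take m s))"

definition stop_time :: "nat \<Rightarrow> (bool list \<Rightarrow> bool) \<Rightarrow> bool list \<Rightarrow> nat" where
  "stop_time N P s = (LEAST m. length s \<le> m \<or> (N \<le> m \<and> \<not> P (take m s)))"

lemma stop_time_le_length: "stop_time N P s \<le> length s"
  unfolding stop_time_def by (rule Least_le) simp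

lemma stop_time_eq_length: "holds_since N P s \<Longrightarrow> stop_time N P s = length s"
  unfolding stop_time_def holds_since_def
  by (rule Least_equality) (auto simp: not_le intro: ccontr)

lemma stop_time_short: "length s \<le> N \<Longrightarrow> stop_time N P s = length s"
  unfolding stop_time_def by (rule Least_equality) auto

lemma stop_time_snoc:
  "stop_time N P (s @ [x]) = (if holds_since N P s then Suc (length s) else stop_time N P s)"
proof (cases "holds_since N P s")
  case True
  have "Suc (length s) \<le> m" if "length (s @ [x]) \<le> m \<or> N \<le> m \<and> \<not> P (take m (s @ [x]))" for m
  proof (rule ccontr)
    assume "\<not> Suc (length s) \<le> m"
    then show False using that True unfolding holds_since_def by auto
  qed
  then show ?thesis using True unfolding stop_time_def by (auto intro: Least_equality)
next
  case False
  then obtain m0 where m0: "N \<le> m0" "m0 \<le> length s" "\<not> P (take m0 s)"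
    unfolding holds_since_def by blast
  let ?k = "stop_time N P s"
  have k: "length s \<le> ?k \<or> N \<le> ?k \<and> \<not> P (take ?k s)"
    unfolding stop_time_def by (rule LeastI[of _ "length s"]) simp
  have "?k \<le> m0" unfolding stop_time_def by (rule Least_le) (use m0 in simp)
  then have "length (s @ [x]) \<le> ?k \<or> N \<le> ?k \<and> \<not> P (take ?k (s @ [x]))"
    using k m0 by (cases "?k = length s") auto
  moreover have "?k \<le> m" if "length (s @ [x]) \<le> m \<or> N \<le> m \<and> \<not> P (take m (s @ [x]))" for m
  proof (cases "m \<le> length s")
    case True
    then show ?thesis using that unfolding stop_time_def by (auto intro: Least_le)
  qed (use stop_time_le_length[of N P s] in simp)
  ultimately show ?thesis using False unfolding stop_time_def[of N P "s @ [x]"]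
    by (auto intro: Least_equality)
qed

lemma holds_since_iff:
  assumes "N \<le> length s"
  shows "holds_since N P s \<longleftrightarrow> stop_time N P s = length s \<and> P s"
proof
  assume "holds_since N P s"
  then show "stop_time N P s = length s \<and> P s"
    using assms stop_time_eq_length unfolding holds_since_def by (metis order_refl take_all)
next
  assume stop: "stop_time N P s = length s \<and> P s"
  show "holds_since N P s" unfolding holds_since_def
  proof (intro allI impI)
    fix m assume m: "N \<le> m \<and> m \<le> length s"
    show "P (take m s)"
    proof (cases "m = length s")
      case False
      then have "m < stop_time N P s" using m stop by simp
      then show ?thesis using m unfolding stop_time_def by (auto dest: not_less_Least)
    qed (use stop in simp)
  qed
qed

definition stopped_process ::
    "bool list \<Rightarrow> (bool list \<Rightarrow> bool) \<Rightarrow> (bool list \<Rightarrow> real) \<Rightarrow> bool list \<Rightarrow> real" where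
  "stopped_process u P T s = (if prefix u s then T (take (stop_time (length u) P s) s) else 1)"

lemma stopped_process_snoc_cases:
  assumes "T u \<le> 1"
  shows "(\<forall>x. stopped_process u P T (s @ [x]) \<le> stopped_process u P T s) \<or>
    (P s \<and> (\<forall>x. stopped_process u P T (s @ [x]) = T (s @ [x])) \<and> stopped_process u P T s = T s)"
proof (cases "prefix u s")
  case True
  then have u_le: "length u \<le> length s" by (rule prefix_length_le)
  show ?thesis
  proof (cases "holds_since (length u) P s")
    case True
    then have "P s" "stop_time (length u) P s = length s" using holds_since_iff[OF u_le] by auto
    then show ?thesis using \<open>prefix u s\<close> True by (simp add: stopped_process_def stop_time_snoc)
  next
    case False
    then show ?thesis using \<open>prefix u s\<close> stop_time_le_length[of "length u" P s]
      by (simp add: stopped_process_def stop_time_snoc)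
  qed
next
  case False
  then show ?thesis using assms by (auto simp: stopped_process_def stop_time_short)
qed

lemma stopped_process_nonneg: "(\<And>s. 0 \<le> T s) \<Longrightarrow> 0 \<le> stopped_process u P T s"
  by (simp add: stopped_process_def)

lemma stopped_process_Nil: "u \<noteq> [] \<Longrightarrow> stopped_process u P T [] = 1"
  by (simp add: stopped_process_def)

lemma prefix_iff_take: "prefix u s \<longleftrightarrow> length u \<le> length s \<and> take (length u) s = u"
  by (metis append_eq_conv_conj prefix_def prefix_length_le)

lemma length_pre [simp]: "length (pre \<omega> n) = n"
  by (simp add: pre_def)

lemma take_pre: "m \<le> n \<Longrightarrow> take m (pre \<omega> n) = pre \<omega> m"
  by (simp add: pre_def take_map)

lemma pre_Suc: "pre \<omega> (Suc n) = pre \<omega> n @ [\<omega> n]"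
  by (simp add: pre_def)

lemma prefix_pre: "m \<le> n \<Longrightarrow> prefix (pre \<omega> m) (pre \<omega> n)"
  by (metis take_is_prefix take_pre)

lemma stopped_process_pre:
  assumes "\<And>n. N \<le> n \<Longrightarrow> P (pre \<omega> n)" "N \<le> n"
  shows "stopped_process (pre \<omega> N) P T (pre \<omega> n) = T (pre \<omega> n)"
proof -
  have "holds_since N P (pre \<omega> n)"
    unfolding holds_since_def using assms(1) by (simp add: take_pre)
  then show ?thesis
    using assms(2) by (simp add: stopped_process_def prefix_pre stop_time_eq_length)
qed

lemma code_length_enc_sit [simp]: "code_length (enc_sit s) = length s"
  by (simp add: enc_sit_def)

lemma code_take_enc_sit [simp]: "code_take m (enc_sit s) = enc_sit (take m s)"
  by (simp add: enc_sit_def take_map)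

lemma inj_enc_sit: "inj enc_sit"
  unfolding enc_sit_def
  by (intro injI) (auto simp: list_encode_eq inj_map_eq_map inj_def)

lemma decidable_on_prefix: "decidable_on enc_sit (prefix u)"
  unfolding decidable_on_def prefix_iff_take
  by (intro exI[of _ "\<lambda>c. length u \<le> code_length c \<and> code_take (length u) c = enc_sit u"] conjI
      rec_pred_conj rec_pred_le rec_pred_eq rec1_code_length rec1_code_take rec1_const rec1_id)
    (simp add: inj_enc_sit[THEN inj_eq])

lemma recursive_map_stop_time:
  assumes "decidable_on enc_sit P"
  shows "recursive_map enc_sit id (stop_time N P)"
proof -
  obtain Q where Q: "rec_pred Q" "\<And>s. Q (enc_sit s) = P s"
    using assms unfolding decidable_on_def by blast
  define S where "S c = (LEAST m. code_length c \<le> m \<or> (N \<le> m \<and> \<not> Q (code_take m c)))" for c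
  have "rec1 S" unfolding S_def
  proof (rule rec1_Least)
    show "rec_pred (\<lambda>z. code_length (unpair_snd z) \<le> unpair_fst z \<or>
        N \<le> unpair_fst z \<and> \<not> Q (code_take (unpair_fst z) (unpair_snd z)))"
      by (intro rec_pred_disj rec_pred_conj rec_pred_le rec_pred_not rec_pred_comp[OF Q(1)]
          rec1_code_take rec1_comp[OF rec1_code_length] rec1_unpair_fst rec1_unpair_snd rec1_const)
  qed blast
  moreover have "S (enc_sit s) = stop_time N P s" for s
    by (simp add: S_def stop_time_def Q(2))
  ultimately show ?thesis unfolding recursive_map_def by auto
qed

lemma recursive_map_take_stop_time:
  assumes "decidable_on enc_sit P"
  shows "recursive_map enc_sit enc_sit (\<lambda>s. take (stop_time N P s) s)"
proof -
  obtain S where "rec1 S" "\<And>s. S (enc_sit s) = stop_time N P s"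
    using recursive_map_stop_time[OF assms] unfolding recursive_map_def by auto
  then show ?thesis unfolding recursive_map_def
    by (intro exI[of _ "\<lambda>c. code_take (S c) c"] conjI rec1_code_take rec1_id) auto
qed

lemma decidable_on_holds_since:
  assumes "decidable_on enc_sit P"
  shows "decidable_on enc_sit (\<lambda>s. prefix u s \<and> holds_since (length u) P s)"
proof -
  have "decidable_on enc_sit (\<lambda>s. prefix u s \<and> stop_time (length u) P s = length s \<and> P s)"
  proof (intro decidable_on_conj decidable_on_prefix assms)
    obtain S where "rec1 S" "\<And>s. S (enc_sit s) = stop_time (length u) P s"
      using recursive_map_stop_time[OF assms] unfolding recursive_map_def by auto
    then show "decidable_on enc_sit (\<lambda>s. stop_time (length u) P s = length s)"
      unfolding decidable_on_def
      by (intro exI[of _ "\<lambda>c. S c = code_length c"] conjI rec_pred_eq rec1_code_length) auto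
  qed
  moreover have "prefix u s \<and> holds_since (length u) P s \<longleftrightarrow>
      prefix u s \<and> stop_time (length u) P s = length s \<and> P s" for s
    using holds_since_iff[OF prefix_length_le] by blast
  ultimately show ?thesis by (simp only:)
qed

lemma intervalsE:
  assumes "I \<in> intervals"
  obtains a b where "I = {a..b}" "0 \<le> a" "a \<le> b" "b \<le> 1"
  using assms unfolding intervals_def by blast

lemma intervalsI: "0 \<le> a \<Longrightarrow> a \<le> b \<Longrightarrow> b \<le> 1 \<Longrightarrow> {a..b} \<in> intervals"
  unfolding intervals_def by blast

lemma forecasting_system_eq:
  assumes "forecasting_system \<phi>"
  shows "\<phi> s = {lower_fc \<phi> s..upper_fc \<phi> s}"
    and "0 \<le> lower_fc \<phi> s" "lower_fc \<phi> s \<le> upper_fc \<phi> s" "upper_fc \<phi> s \<le> 1"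
proof -
  obtain a b where "\<phi> s = {a..b}" "0 \<le> a" "a \<le> b" "b \<le> 1"
    using assms unfolding forecasting_system_def by (meson intervalsE)
  then show "\<phi> s = {lower_fc \<phi> s..upper_fc \<phi> s}"
    and "0 \<le> lower_fc \<phi> s" "lower_fc \<phi> s \<le> upper_fc \<phi> s" "upper_fc \<phi> s \<le> 1"
    by (simp_all add: lower_fc_def upper_fc_def)
qed

lemma forecasting_system_const: "I \<in> intervals \<Longrightarrow> forecasting_system (\<lambda>_. I)"
  by (simp add: forecasting_system_def)

lemma upper_exp_nonpos_iff:
  assumes "I \<in> intervals"
  shows "upper_exp I f \<le> 0 \<longleftrightarrow> (\<forall>p\<in>I. p * f True + (1 - p) * f False \<le> 0)"
proof -
  obtain a b where I: "I = {a..b}" "0 \<le> a" "a \<le> b" "b \<le> 1"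
    using assms by (rule intervalsE)
  have weight: "q * y \<le> \<bar>y\<bar>" if "0 \<le> q" "q \<le> 1" for q y :: real
    using order_trans[OF mult_left_mono[OF abs_ge_self] mult_left_le_one_le[OF abs_ge_zero]] that
    by blast
  have "p * f True + (1 - p) * f False \<le> \<bar>f True\<bar> + \<bar>f False\<bar>" if "p \<in> I" for p
    using weight[of p "f True"] weight[of "1 - p" "f False"] that I by auto
  then have "bdd_above ((\<lambda>p. p * f True + (1 - p) * f False) ` I)" by (rule bdd_aboveI2)
  moreover have "I \<noteq> {}" using I by simp
  ultimately show ?thesis unfolding upper_exp_def by (simp add: cSup_le_iff)
qed

lemma supermartingale_iff:
  assumes "forecasting_system \<phi>"
  shows "supermartingale \<phi> F \<longleftrightarrow>
    (\<forall>s. \<forall>p\<in>\<phi> s. p * (F (s @ [True]) - F s) + (1 - p) * (F (s @ [False]) - F s) \<le> 0)"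
  using assms unfolding supermartingale_def forecasting_system_def
  by (simp add: upper_exp_nonpos_iff)

lemma supermartingale_scale:
  assumes "forecasting_system \<phi>" "0 \<le> c" "supermartingale \<phi> F"
  shows "supermartingale \<phi> (\<lambda>s. c * F s)"
proof -
  have "c * (p * (F (s @ [True]) - F s) + (1 - p) * (F (s @ [False]) - F s)) \<le> 0"
    if "p \<in> \<phi> s" for s p
    using assms that by (intro mult_nonneg_nonpos) (auto simp: supermartingale_iff)
  then show ?thesis using assms(1) by (simp add: supermartingale_iff algebra_simps)
qed

lemma supermartingale_stopped_process:
  assumes "I \<in> intervals" "forecasting_system \<phi>" "\<And>s. P s \<Longrightarrow> \<phi> s \<subseteq> I"
    and "supermartingale (\<lambda>_. I) T" "T u \<le> 1"
  shows "supermartingale \<phi> (stopped_process u P T)"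
  unfolding supermartingale_iff[OF assms(2)]
proof (intro allI ballI)
  fix s p assume p: "p \<in> \<phi> s"
  let ?F = "stopped_process u P T"
  have p01: "0 \<le> p" "p \<le> 1" using p forecasting_system_eq[OF assms(2), of s] by auto
  consider "\<forall>x. ?F (s @ [x]) \<le> ?F s"
    | "P s" "\<forall>x. ?F (s @ [x]) = T (s @ [x])" "?F s = T s"
    using stopped_process_snoc_cases[of T u P s, OF assms(5)] by blast
  then show "p * (?F (s @ [True]) - ?F s) + (1 - p) * (?F (s @ [False]) - ?F s) \<le> 0"
  proof cases
    case 1
    then show ?thesis using p01 by (intro add_nonpos_nonpos mult_nonneg_nonpos) auto
  next
    case 2
    then have "p \<in> I" using assms(3) p by blast
    then show ?thesis using 2 assms(4)
      by (simp add: supermartingale_iff[OF forecasting_system_const[OF assms(1)]])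
  qed
qed

lemma test_supermartingale_stopped_process:
  assumes "I \<in> intervals" "forecasting_system \<phi>" "\<And>s. P s \<Longrightarrow> \<phi> s \<subseteq> I"
    and "supermartingale (\<lambda>_. I) T" "\<And>s. 0 \<le> T s" "T u \<le> 1" "u \<noteq> []"
  shows "test_supermartingale \<phi> (stopped_process u P T)"
  unfolding test_supermartingale_def
  by (intro conjI allI supermartingale_stopped_process[OF assms(1-4,6)] stopped_process_nonneg
      assms(5) stopped_process_Nil[OF assms(7)])

definition stopped_multiplier ::
    "bool list \<Rightarrow> (bool list \<Rightarrow> bool) \<Rightarrow> (bool list \<Rightarrow> bool \<Rightarrow> real) \<Rightarrow> bool list \<Rightarrow> bool \<Rightarrow> real"
  where "stopped_multiplier u P D s x = (if prefix u s \<and> holds_since (length u) P s then D s x else 1)"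

lemma mult_proc_Nil [simp]: "mult_proc D [] = 1"
  by (simp add: mult_proc_def)

lemma mult_proc_snoc: "mult_proc D (s @ [x]) = mult_proc D s * D s x"
proof -
  have "(\<Prod>k<length s. D (take k (s @ [x])) ((s @ [x]) ! k)) = mult_proc D s"
    unfolding mult_proc_def by (rule prod.cong) (auto simp: nth_append)
  then show ?thesis by (simp add: mult_proc_def)
qed

lemma mult_proc_stopped_multiplier:
  assumes "u \<noteq> []"
  shows "mult_proc (stopped_multiplier u P D) s * mult_proc D u =
    (if prefix u s then mult_proc D (take (stop_time (length u) P s) s) else mult_proc D u)"
proof (induction s rule: rev_induct)
  case Nil
  then show ?case using assms by simp
next
  case (snoc x s)
  let ?M = "mult_proc D" and ?D' = "stopped_multiplier u P D"
  have step: "mult_proc ?D' (s @ [x]) * ?M u = (mult_proc ?D' s * ?M u) * ?D' s x"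
    by (simp add: mult_proc_snoc ac_simps)
  consider "prefix u s" "holds_since (length u) P s" | "prefix u s" "\<not> holds_since (length u) P s"
    | "\<not> prefix u s" by blast
  then show ?case
  proof cases
    case 1
    then have "stop_time (length u) P s = length s" by (rule_tac stop_time_eq_length)
    then show ?thesis unfolding step snoc.IH
      using 1 by (simp add: stopped_multiplier_def stop_time_snoc mult_proc_snoc)
  next
    case 2
    then show ?thesis unfolding step snoc.IH using stop_time_le_length[of "length u" P s]
      by (simp add: stopped_multiplier_def stop_time_snoc)
  next
    case 3
    then show ?thesis unfolding step snoc.IH
      by (auto simp: stopped_multiplier_def stop_time_short)
  qed
qed

lemma mult_proc_stopped_multiplier_eq:
  assumes "u \<noteq> []" "0 < mult_proc D u"
  shows "mult_proc (stopped_multiplier u P D) =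
    stopped_process u P (\<lambda>s. mult_proc D s / mult_proc D u)"
proof
  fix s
  have "mult_proc (stopped_multiplier u P D) s * mult_proc D u =
      stopped_process u P (\<lambda>s. mult_proc D s / mult_proc D u) s * mult_proc D u"
    using mult_proc_stopped_multiplier[OF assms(1)] assms(2) by (simp add: stopped_process_def)
  then show "mult_proc (stopped_multiplier u P D) s =
      stopped_process u P (\<lambda>s. mult_proc D s / mult_proc D u) s"
    using assms(2) by simp
qed

lemma computable_real_stopped_process:
  assumes "decidable_on enc_sit P" "computable_real enc_sit T"
  shows "computable_real enc_sit (stopped_process u P T)"
  using computable_real_If[OF decidable_on_prefix computable_real_reindex[OF
      recursive_map_take_stop_time[OF assms(1)] assms(2)], of u "length u"]
  by (simp add: stopped_process_def[abs_def])

lemma lsc_real_stopped_process: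
  assumes "decidable_on enc_sit P" "lsc_real enc_sit T"
  shows "lsc_real enc_sit (stopped_process u P T)"
  using lsc_real_If[OF decidable_on_prefix lsc_real_reindex[OF
      recursive_map_take_stop_time[OF assms(1)] assms(2)], of u "length u"]
  by (simp add: stopped_process_def[abs_def])

lemma lsc_real_stopped_multiplier:
  assumes "decidable_on enc_sit P" "lsc_real enc_sx (\<lambda>(s, x). D s x)"
  shows "lsc_real enc_sx (\<lambda>(s, x). stopped_multiplier u P D s x)"
proof -
  have "recursive_map enc_sx enc_sit fst"
    unfolding recursive_map_def enc_sx_def by (intro exI[of _ unpair_fst] conjI rec1_unpair_fst) simp
  from decidable_on_comp[OF decidable_on_holds_since[OF assms(1)] this]
  have "decidable_on enc_sx (\<lambda>(s, x). prefix u s \<and> holds_since (length u) P s)"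
    by (simp add: case_prod_unfold)
  from lsc_real_If[OF this assms(2)] show ?thesis
    by (rule back_subst[of "lsc_real enc_sx"]) (auto simp: stopped_multiplier_def)
qed

lemma limsup_eventually_cmult:
  fixes f g :: "nat \<Rightarrow> real"
  assumes "0 < c" "\<And>n. N \<le> n \<Longrightarrow> g n = c * f n"
  shows "limsup (\<lambda>n. ereal (g n)) = ereal c * limsup (\<lambda>n. ereal (f n))"
proof -
  have "limsup (\<lambda>n. ereal (g n)) = limsup (\<lambda>n. ereal c * ereal (f n))"
    by (rule Limsup_eq) (use assms(2) in \<open>auto simp: eventually_sequentially\<close>)
  also have "\<dots> = ereal c * limsup (\<lambda>n. ereal (f n))"
    by (rule limsup_ereal_mult_left) (use assms(1) in simp)
  finally show ?thesis .
qed

lemma unbounded_on_eventually_scale: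
  assumes "unbounded_on T \<omega>" "0 < c" "\<And>n. N \<le> n \<Longrightarrow> T' (pre \<omega> n) = c * T (pre \<omega> n)"
  shows "unbounded_on T' \<omega>"
  using assms limsup_eventually_cmult[OF assms(2), of N "\<lambda>n. T' (pre \<omega> n)" "\<lambda>n. T (pre \<omega> n)"]
  unfolding unbounded_on_def by simp

lemma not_bdd_above_divide:
  fixes f :: "'a \<Rightarrow> real"
  assumes "\<not> bdd_above (range f)" "0 < c"
  shows "\<not> bdd_above (range (\<lambda>x. f x / c))"
proof
  assume "bdd_above (range (\<lambda>x. f x / c))"
  then obtain B where "\<And>x. f x / c \<le> B" by (auto simp: bdd_above_def)
  then have "\<And>x. f x \<le> B * c" using assms(2) by (simp add: divide_le_eq)
  then have "bdd_above (range f)" by (rule bdd_aboveI2)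
  then show False using assms(1) by contradiction
qed

lemma real_le_pow2E:
  fixes x :: real
  obtains j :: nat where "x \<le> 2 ^ j"
  using real_arch_pow[of 2 x] by (auto intro: less_imp_le)

lemma mult_proc_pre_nonzero:
  assumes "unbounded_on (mult_proc D) \<omega>"
  shows "mult_proc D (pre \<omega> m) \<noteq> 0"
proof
  assume zero: "mult_proc D (pre \<omega> m) = 0"
  have "mult_proc D (pre \<omega> n) = 0" if "m \<le> n" for n
    using that by (induction n rule: dec_induct) (use zero in \<open>simp_all add: pre_Suc mult_proc_snoc\<close>)
  then have "limsup (\<lambda>n. ereal (mult_proc D (pre \<omega> n))) = limsup (\<lambda>n. 0)"
    by (intro Limsup_eq) (auto simp: eventually_sequentially)
  then show False using assms by (simp add: unbounded_on_def Limsup_const)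
qed

section \<open>Selection rules: changing finitely many forecasts\<close>

lemma sum_ge_neg_card:
  fixes f :: "nat \<Rightarrow> real"
  assumes "\<And>k. -1 \<le> f k" "\<And>k. N \<le> k \<Longrightarrow> 0 \<le> f k"
  shows "- real N \<le> (\<Sum>k<n. f k)"
proof -
  have "- real (min n N) \<le> (\<Sum>k<n. f k)"
  proof (induction n)
    case (Suc n)
    show ?case
    proof (cases "n < N")
      case True
      then have "min (Suc n) N = Suc (min n N)" by simp
      then show ?thesis using Suc assms(1)[of n] by simp
    next
      case False
      then have "min (Suc n) N = min n N" by simp
      then show ?thesis using Suc assms(2)[of n] False by simp
    qed
  qed simp
  then show ?thesis by linarith
qed

lemma liminf_ratio_nonneg_add:
  fixes A E c :: "nat \<Rightarrow> real"
  assumes c: "filterlim c at_top sequentially" and A: "0 \<le> liminf (\<lambda>n. ereal (A n / c n))"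
    and E: "\<And>n. - M \<le> E n"
  shows "0 \<le> liminf (\<lambda>n. ereal ((A n + E n) / c n))"
proof -
  have "((\<lambda>n. - M / c n) \<longlongrightarrow> 0) sequentially"
    by (rule tendsto_divide_0[OF tendsto_const filterlim_at_top_imp_at_infinity[OF c]])
  then have "(\<lambda>n. ereal (- M / c n)) \<longlonglongrightarrow> 0" by (simp add: zero_ereal_def)
  then have "liminf (\<lambda>n. ereal (- M / c n) + ereal (A n / c n)) = 0 + liminf (\<lambda>n. ereal (A n / c n))"
    by (rule ereal_liminf_lim_add) simp
  then have "0 \<le> liminf (\<lambda>n. ereal (- M / c n) + ereal (A n / c n))" using A by simp
  also have "\<dots> \<le> liminf (\<lambda>n. ereal ((A n + E n) / c n))"
  proof (rule Liminf_mono)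
    show "\<forall>\<^sub>F n in sequentially. ereal (- M / c n) + ereal (A n / c n) \<le> ereal ((A n + E n) / c n)"
      using c unfolding filterlim_at_top_dense
    proof (elim allE[of _ 0] eventually_mono)
      fix n assume "0 < c n"
      then show "ereal (- M / c n) + ereal (A n / c n) \<le> ereal ((A n + E n) / c n)"
        using E[of n] divide_right_mono[of "A n - M" "A n + E n" "c n"]
        by (simp add: diff_divide_distrib)
    qed
  qed
  finally show ?thesis .
qed

lemma liminf_weighted_average_shift:
  fixes w y g g' c :: "nat \<Rightarrow> real"
  assumes c: "filterlim c at_top sequentially"
    and lim: "0 \<le> liminf (\<lambda>n. ereal ((\<Sum>k<n. w k * (y k - g k)) / c n))"
    and w: "\<And>k. 0 \<le> w k" "\<And>k. w k \<le> 1"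
    and shift: "\<And>k. - 1 \<le> g k - g' k" "\<And>k. N \<le> k \<Longrightarrow> g' k \<le> g k"
  shows "0 \<le> liminf (\<lambda>n. ereal ((\<Sum>k<n. w k * (y k - g' k)) / c n))"
proof -
  have "- real N \<le> (\<Sum>k<n. w k * (g k - g' k))" for n
  proof (rule sum_ge_neg_card)
    show "- 1 \<le> w k * (g k - g' k)" for k
      using mult_left_mono[OF shift(1)[of k] w(1)[of k]] w(2)[of k] by linarith
    show "0 \<le> w k * (g k - g' k)" if "N \<le> k" for k
      using shift(2)[OF that] w(1)[of k] by simp
  qed
  from liminf_ratio_nonneg_add[OF c lim, where E = "\<lambda>n. \<Sum>k<n. w k * (g k - g' k)", OF this]
  show ?thesis by (simp add: sum.distrib[symmetric] algebra_simps)
qed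

lemma limsup_weighted_average_shift:
  fixes w y g g' c :: "nat \<Rightarrow> real"
  assumes c: "filterlim c at_top sequentially"
    and lim: "limsup (\<lambda>n. ereal ((\<Sum>k<n. w k * (y k - g k)) / c n)) \<le> 0"
    and w: "\<And>k. 0 \<le> w k" "\<And>k. w k \<le> 1"
    and shift: "\<And>k. - 1 \<le> g' k - g k" "\<And>k. N \<le> k \<Longrightarrow> g k \<le> g' k"
  shows "limsup (\<lambda>n. ereal ((\<Sum>k<n. w k * (y k - g' k)) / c n)) \<le> 0"
proof -
  have neg: "(\<Sum>k<n. w k * (f k - y k)) / c n = - ((\<Sum>k<n. w k * (y k - f k)) / c n)"
    for f and n
  proof -
    have "(\<Sum>k<n. w k * (f k - y k)) = - (\<Sum>k<n. w k * (y k - f k))"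
      by (simp add: sum_negf[symmetric] algebra_simps)
    then show ?thesis by simp
  qed
  have "0 \<le> liminf (\<lambda>n. ereal ((\<Sum>k<n. w k * (- y k - - g k)) / c n))"
    using lim ereal_Liminf_uminus[of sequentially "\<lambda>n. ereal ((\<Sum>k<n. w k * (y k - g k)) / c n)"]
    by (simp add: neg)
  from liminf_weighted_average_shift[OF c this w, of "\<lambda>k. - g' k" N] shift
  have "0 \<le> liminf (\<lambda>n. - ereal ((\<Sum>k<n. w k * (y k - g' k)) / c n))" by (simp add: neg)
  then show ?thesis
    using ereal_Liminf_uminus[of sequentially "\<lambda>n. ereal ((\<Sum>k<n. w k * (y k - g' k)) / c n)"]
    by simp
qed

lemma forecast_bounds_mono:
  assumes "forecasting_system \<phi>" "forecasting_system \<psi>" "\<phi> s \<subseteq> \<psi> s"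
  shows "lower_fc \<psi> s \<le> lower_fc \<phi> s" "upper_fc \<phi> s \<le> upper_fc \<psi> s"
  using assms(3) forecasting_system_eq[OF assms(1), of s] forecasting_system_eq[OF assms(2), of s]
  by auto

lemma CH_condition_const:
  assumes I: "I \<in> intervals" and fs: "forecasting_system \<phi>"
    and within: "\<And>n. N \<le> n \<Longrightarrow> \<phi> (pre \<omega> n) \<subseteq> I" and CH: "CH_condition \<phi> \<omega> Sel"
  shows "CH_condition (\<lambda>_. I) \<omega> Sel"
  unfolding CH_condition_def
proof (intro impI conjI)
  let ?w = "\<lambda>k. of_bool (Sel (pre \<omega> k)) :: real"
  have fsI: "forecasting_system (\<lambda>_. I)" using I by (rule forecasting_system_const)
  have gaps: "- 1 \<le> lower_fc \<phi> s - lower_fc (\<lambda>_. I) s" "- 1 \<le> upper_fc (\<lambda>_. I) s - upper_fc \<phi> s" for s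
    using forecasting_system_eq(2-4)[OF fs, of s] forecasting_system_eq(2-4)[OF fsI, of s] by linarith+
  note mono = forecast_bounds_mono[OF fs fsI within]
  assume c: "filterlim (sel_count Sel \<omega>) at_top sequentially"
  with CH have CH_lower: "0 \<le> liminf (\<lambda>n. ereal ((\<Sum>k<n. ?w k *
      (of_bool (\<omega> k) - lower_fc \<phi> (pre \<omega> k))) / sel_count Sel \<omega> n))"
    and CH_upper: "limsup (\<lambda>n. ereal ((\<Sum>k<n. ?w k *
      (of_bool (\<omega> k) - upper_fc \<phi> (pre \<omega> k))) / sel_count Sel \<omega> n)) \<le> 0"
    unfolding CH_condition_def by auto
  show "0 \<le> liminf (\<lambda>n. ereal ((\<Sum>k<n. ?w k *
      (of_bool (\<omega> k) - lower_fc (\<lambda>_. I) (pre \<omega> k))) / sel_count Sel \<omega> n))"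
    by (rule liminf_weighted_average_shift[OF c CH_lower, where N = N])
      (use gaps mono in simp_all)
  show "limsup (\<lambda>n. ereal ((\<Sum>k<n. ?w k *
      (of_bool (\<omega> k) - upper_fc (\<lambda>_. I) (pre \<omega> k))) / sel_count Sel \<omega> n)) \<le> 0"
    by (rule limsup_weighted_average_shift[OF c CH_upper, where N = N])
      (use gaps mono in simp_all)
qed

section \<open>Randomness for a forecasting system that is eventually inside an interval\<close>

locale eventually_within =
  fixes I :: "real set" and \<phi> :: "bool list \<Rightarrow> real set" and P :: "bool list \<Rightarrow> bool"
    and \<omega> :: "nat \<Rightarrow> bool" and N :: nat
  assumes I: "I \<in> intervals" and forecasting: "forecasting_system \<phi>"
    and decidable: "decidable_on enc_sit P" and within: "\<And>s. P s \<Longrightarrow> \<phi> s \<subseteq> I"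
    and eventually: "\<And>n. N \<le> n \<Longrightarrow> P (pre \<omega> n)"
begin

definition u :: "bool list" where
  "u = pre \<omega> (Suc N)"

lemma u_not_Nil: "u \<noteq> []"
  by (simp add: u_def pre_def)

lemma stopped_process_on_path:
  "Suc N \<le> n \<Longrightarrow> stopped_process u P T (pre \<omega> n) = T (pre \<omega> n)"
  unfolding u_def using eventually by (intro stopped_process_pre) auto

lemma test_supermartingale_stopped_scaled:
  assumes "test_supermartingale (\<lambda>_. I) T" "T u \<le> c" "0 < c"
  shows "test_supermartingale \<phi> (stopped_process u P (\<lambda>s. T s / c))"
proof (rule test_supermartingale_stopped_process[OF I forecasting within _ _ _ u_not_Nil])
  have "supermartingale (\<lambda>_. I) (\<lambda>s. (1 / c) * T s)"
    using assms(1,3) by (intro supermartingale_scale forecasting_system_const I)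
      (auto simp: test_supermartingale_def)
  then show "supermartingale (\<lambda>_. I) (\<lambda>s. T s / c)" by simp
next
  show "0 \<le> T s / c" for s using assms(1,3) by (simp add: test_supermartingale_def)
next
  show "T u / c \<le> 1" using assms(2,3) by simp
qed

lemma unbounded_on_stopped_scaled:
  assumes "unbounded_on T \<omega>" "0 < c"
  shows "unbounded_on (stopped_process u P (\<lambda>s. T s / c)) \<omega>"
proof (rule unbounded_on_eventually_scale[OF assms(1), of "1 / c" "Suc N"])
  show "stopped_process u P (\<lambda>s. T s / c) (pre \<omega> n) = 1 / c * T (pre \<omega> n)" if "Suc N \<le> n" for n
    using stopped_process_on_path[OF that, of "\<lambda>s. T s / c"] by simp
qed (use assms(2) in simp)

lemma random_ML:
  assumes "random R_ML \<phi> \<omega>"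
  shows "random R_ML (\<lambda>_. I) \<omega>"
proof (unfold random.simps, clarify)
  fix T assume T: "lsc_real enc_sit T" "test_supermartingale (\<lambda>_. I) T" "unbounded_on T \<omega>"
  obtain j :: nat where j: "T u \<le> 2 ^ j" by (rule real_le_pow2E)
  have "lsc_real enc_sit (stopped_process u P (\<lambda>s. T s / 2 ^ j))"
    by (intro lsc_real_stopped_process decidable lsc_real_divide_pow2 T(1))
  moreover have "test_supermartingale \<phi> (stopped_process u P (\<lambda>s. T s / 2 ^ j))"
    using T(2) j by (rule test_supermartingale_stopped_scaled) simp
  moreover have "unbounded_on (stopped_process u P (\<lambda>s. T s / 2 ^ j)) \<omega>"
    using T(3) by (rule unbounded_on_stopped_scaled) simp
  ultimately show False using assms by auto
qed

lemma random_C: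
  assumes "random R_C \<phi> \<omega>"
  shows "random R_C (\<lambda>_. I) \<omega>"
proof (unfold random.simps, clarify)
  fix T assume T: "computable_real enc_sit T" "test_supermartingale (\<lambda>_. I) T" "unbounded_on T \<omega>"
  obtain j :: nat where j: "T u \<le> 2 ^ j" by (rule real_le_pow2E)
  have "computable_real enc_sit (stopped_process u P (\<lambda>s. T s / 2 ^ j))"
    by (intro computable_real_stopped_process decidable computable_real_divide_pow2 T(1))
  moreover have "test_supermartingale \<phi> (stopped_process u P (\<lambda>s. T s / 2 ^ j))"
    using T(2) j by (rule test_supermartingale_stopped_scaled) simp
  moreover have "unbounded_on (stopped_process u P (\<lambda>s. T s / 2 ^ j)) \<omega>"
    using T(3) by (rule unbounded_on_stopped_scaled) simp
  ultimately show False using assms by auto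
qed

lemma random_S:
  assumes "random R_S \<phi> \<omega>"
  shows "random R_S (\<lambda>_. I) \<omega>"
proof (unfold random.simps, clarify)
  fix T \<tau> assume T: "computable_real enc_sit T" "test_supermartingale (\<lambda>_. I) T"
    and \<tau>: "computable_real id \<tau>" "mono \<tau>" "\<forall>n. 0 \<le> \<tau> n" "\<not> bdd_above (range \<tau>)"
    and limsup: "0 \<le> limsup (\<lambda>n. ereal (T (pre \<omega> n) - \<tau> n))"
  obtain j :: nat where j: "T u \<le> 2 ^ j" by (rule real_le_pow2E)
  define T' where "T' = stopped_process u P (\<lambda>s. T s / 2 ^ j)"
  define \<tau>' where "\<tau>' n = \<tau> n / 2 ^ j" for n
  have "computable_real enc_sit T'" unfolding T'_def
    by (intro computable_real_stopped_process decidable computable_real_divide_pow2 T(1))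
  moreover have "test_supermartingale \<phi> T'" unfolding T'_def
    using T(2) j by (rule test_supermartingale_stopped_scaled) simp
  moreover have "computable_real id \<tau>'"
    unfolding \<tau>'_def by (rule computable_real_divide_pow2[OF \<tau>(1)])
  moreover have "mono \<tau>'"
    using \<tau>(2) unfolding \<tau>'_def mono_def by (simp add: divide_right_mono)
  moreover have "\<forall>n. 0 \<le> \<tau>' n" using \<tau>(3) by (simp add: \<tau>'_def)
  moreover have "\<not> bdd_above (range \<tau>')"
    unfolding \<tau>'_def by (rule not_bdd_above_divide[OF \<tau>(4)]) simp
  moreover have "limsup (\<lambda>n. ereal (T' (pre \<omega> n) - \<tau>' n)) =
      ereal (1 / 2 ^ j) * limsup (\<lambda>n. ereal (T (pre \<omega> n) - \<tau> n))"
    by (rule limsup_eventually_cmult[where N = "Suc N"])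
      (simp_all add: T'_def \<tau>'_def stopped_process_on_path diff_divide_distrib)
  then have "0 \<le> limsup (\<lambda>n. ereal (T' (pre \<omega> n) - \<tau>' n))" using limsup by simp
  ultimately have "\<not> random R_S \<phi> \<omega>"
    unfolding random.simps not_not by (intro exI[of _ T'] exI[of _ \<tau>']) simp
  then show False using assms by contradiction
qed

lemma random_wML:
  assumes "random R_wML \<phi> \<omega>"
  shows "random R_wML (\<lambda>_. I) \<omega>"
proof (unfold random.simps, clarify)
  fix D assume D: "lsc_real enc_sx (\<lambda>(s, x). D s x)" "test_supermartingale (\<lambda>_. I) (mult_proc D)"
    "unbounded_on (mult_proc D) \<omega>"
  have "0 \<le> mult_proc D u" using D(2) by (simp add: test_supermartingale_def)
  then have pos: "0 < mult_proc D u"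
    using mult_proc_pre_nonzero[OF D(3), of "Suc N"] by (simp add: u_def less_le)
  let ?D' = "stopped_multiplier u P D"
  have eq: "mult_proc ?D' = stopped_process u P (\<lambda>s. mult_proc D s / mult_proc D u)"
    by (rule mult_proc_stopped_multiplier_eq[OF u_not_Nil pos])
  have "lsc_real enc_sx (\<lambda>(s, x). ?D' s x)"
    by (rule lsc_real_stopped_multiplier[OF decidable D(1)])
  moreover have "test_supermartingale \<phi> (mult_proc ?D')"
    unfolding eq using D(2) order_refl pos by (rule test_supermartingale_stopped_scaled)
  moreover have "unbounded_on (mult_proc ?D') \<omega>"
    unfolding eq using D(3) pos by (rule unbounded_on_stopped_scaled)
  ultimately show False using assms by auto
qed

lemma random_const:
  assumes "random R \<phi> \<omega>"
  shows "random R (\<lambda>_. I) \<omega>"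
proof -
  have CH: "CH_condition (\<lambda>_. I) \<omega> Sel" if "CH_condition \<phi> \<omega> Sel" for Sel
    using within eventually by (intro CH_condition_const[OF I forecasting _ that]) blast
  show ?thesis
  proof (cases R)
    case R_ML
    then show ?thesis using assms by (simp only:) (rule random_ML)
  next
    case R_wML
    then show ?thesis using assms by (simp only:) (rule random_wML)
  next
    case R_C
    then show ?thesis using assms by (simp only:) (rule random_C)
  next
    case R_S
    then show ?thesis using assms by (simp only:) (rule random_S)
  next
    case R_CH
    then show ?thesis using assms CH by (simp only: random.simps) blast
  next
    case R_wCH
    then show ?thesis using assms CH by (simp only: random.simps) blast
  qed
qed

end

lemma computable_real_rat_approx:
  assumes "computable_real enc f" "0 < \<delta>"
  obtains q where "recursive_map enc enc_rat q" "\<And>d. \<bar>f d - of_rat (q d)\<bar> < \<delta>"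
proof -
  obtain q where q: "recursive_rat_map enc q" "\<And>d n. \<bar>f d - of_rat (q d n)\<bar> < (1/2) ^ n"
    using assms(1) unfolding computable_real_def by blast
  obtain k where k: "(1/2) ^ k < \<delta>" using real_arch_pow_inv[OF assms(2), of "1/2"] by auto
  obtain G where G: "rec1 G" "\<And>d n. G (prod_encode (enc d, n)) = enc_rat (q d n)"
    using recursive_rat_mapE[OF q(1)] by blast
  have "recursive_map enc enc_rat (\<lambda>d. q d k)" unfolding recursive_map_def
    by (intro exI[of _ "\<lambda>c. G (prod_encode (c, k))"] conjI rec1_comp[OF G(1)]
        rec1_prod_encode rec1_id rec1_const) (simp add: G(2))
  moreover have "\<bar>f d - of_rat (q d k)\<bar> < \<delta>" for d using q(2)[of d k] k by linarith
  ultimately show ?thesis by (rule that)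
qed

lemma decidable_on_between_greater:
  assumes f: "computable_real enc f" and "0 \<le> c" "c < d"
  obtains P where "decidable_on enc P" "\<And>e. P e \<Longrightarrow> c < f e" "\<And>e. d \<le> f e \<Longrightarrow> P e"
proof -
  obtain b :: rat where b: "c < of_rat b" "of_rat b < d" using of_rat_dense[OF \<open>c < d\<close>] by blast
  then have "(0::real) < of_rat b" using \<open>0 \<le> c\<close> by linarith
  then have "0 < b" by simp
  obtain q where q: "recursive_map enc enc_rat q"
    and approx: "\<And>e. \<bar>f e - of_rat (q e)\<bar> < min (of_rat b - c) (d - of_rat b)"
    using computable_real_rat_approx[OF f, of "min (of_rat b - c) (d - of_rat b)"] b by auto
  show ?thesis
  proof (rule that[of "\<lambda>e. b < q e"])
    show "decidable_on enc (\<lambda>e. b < q e)"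
      by (rule decidable_on_comp[OF decidable_on_rat_greater[OF \<open>0 < b\<close>] q])
    show "c < f e" if "b < q e" for e
    proof -
      have "of_rat b < (of_rat (q e) :: real)" using that by (simp only: of_rat_less)
      then show ?thesis using approx[of e] by (simp add: abs_less_iff)
    qed
    show "b < q e" if "d \<le> f e" for e
    proof -
      have "of_rat b < (of_rat (q e) :: real)" using that approx[of e] by (simp add: abs_less_iff)
      then show ?thesis by (simp only: of_rat_less)
    qed
  qed
qed

lemma decidable_on_between_less:
  assumes f: "computable_real enc f" and "0 \<le> c" "c < d"
  obtains P where "decidable_on enc P" "\<And>e. P e \<Longrightarrow> f e < d" "\<And>e. f e \<le> c \<Longrightarrow> P e"
proof -
  obtain b :: rat where b: "c < of_rat b" "of_rat b < d" using of_rat_dense[OF \<open>c < d\<close>] by blast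
  then have "(0::real) < of_rat b" using \<open>0 \<le> c\<close> by linarith
  then have "0 < b" by simp
  obtain q where q: "recursive_map enc enc_rat q"
    and approx: "\<And>e. \<bar>f e - of_rat (q e)\<bar> < min (of_rat b - c) (d - of_rat b)"
    using computable_real_rat_approx[OF f, of "min (of_rat b - c) (d - of_rat b)"] b by auto
  show ?thesis
  proof (rule that[of "\<lambda>e. q e < b"])
    show "decidable_on enc (\<lambda>e. q e < b)"
      by (rule decidable_on_comp[OF decidable_on_rat_less[OF \<open>0 < b\<close>] q])
    show "f e < d" if "q e < b" for e
    proof -
      have "of_rat (q e) < (of_rat b :: real)" using that by (simp only: of_rat_less)
      then show ?thesis using approx[of e] by (simp add: abs_less_iff)
    qed
    show "q e < b" if "f e \<le> c" for e
    proof -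
      have "of_rat (q e) < (of_rat b :: real)" using that approx[of e] by (simp add: abs_less_iff)
      then show ?thesis by (simp only: of_rat_less)
    qed
  qed
qed

lemma eventually_above_decidable:
  assumes f: "computable_real enc_sit f" and x: "0 \<le> x"
    and liminf: "ereal x < liminf (\<lambda>n. ereal (f (pre \<omega> n)))"
  obtains b P N where "x < b" "decidable_on enc_sit P" "\<And>s. P s \<Longrightarrow> b < f s"
    "\<And>n. N \<le> n \<Longrightarrow> P (pre \<omega> n)"
proof -
  obtain z where "ereal x < ereal z" and z: "ereal z < liminf (\<lambda>n. ereal (f (pre \<omega> n)))"
    using ereal_dense2[OF liminf] by blast
  then have "x < (x + z) / 2" "(x + z) / 2 < z" by simp_all
  moreover obtain N where "\<And>n. N \<le> n \<Longrightarrow> z < f (pre \<omega> n)"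
    using less_LiminfD[OF z] unfolding eventually_sequentially by auto
  moreover obtain P where "decidable_on enc_sit P" "\<And>s. P s \<Longrightarrow> (x + z) / 2 < f s"
    "\<And>s. z \<le> f s \<Longrightarrow> P s"
    using decidable_on_between_greater[OF f _ \<open>(x + z) / 2 < z\<close>] x \<open>x < (x + z) / 2\<close> by auto
  ultimately show ?thesis using that less_imp_le by metis
qed

lemma eventually_below_decidable:
  assumes f: "computable_real enc_sit f" and nonneg: "\<And>s. 0 \<le> f s"
    and limsup: "limsup (\<lambda>n. ereal (f (pre \<omega> n))) < ereal x"
  obtains b P N where "b < x" "decidable_on enc_sit P" "\<And>s. P s \<Longrightarrow> f s < b"
    "\<And>n. N \<le> n \<Longrightarrow> P (pre \<omega> n)"
proof -
  obtain z where z: "limsup (\<lambda>n. ereal (f (pre \<omega> n))) < ereal z" and "ereal z < ereal x"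
    using ereal_dense2[OF limsup] by blast
  then have "z < (z + x) / 2" "(z + x) / 2 < x" by simp_all
  have "0 \<le> limsup (\<lambda>n. ereal (f (pre \<omega> n)))"
    using nonneg by (intro order_trans[OF Liminf_bounded Liminf_le_Limsup]) simp_all
  then have "0 < z" using z by (metis le_less_trans ereal_less(2))
  obtain N where "\<And>n. N \<le> n \<Longrightarrow> f (pre \<omega> n) < z"
    using Limsup_lessD[OF z] unfolding eventually_sequentially by auto
  moreover obtain P where "decidable_on enc_sit P" "\<And>s. P s \<Longrightarrow> f s < (z + x) / 2"
    "\<And>s. f s \<le> z \<Longrightarrow> P s"
    using decidable_on_between_less[OF f _ \<open>z < (z + x) / 2\<close>] \<open>0 < z\<close> by auto
  ultimately show ?thesis using that \<open>(z + x) / 2 < x\<close> less_imp_le by metis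
qed

lemma I_R_subset_interval:
  assumes "random R \<phi> \<omega>" "eventually_within I \<phi> P \<omega> N"
  shows "I_R R \<omega> \<subseteq> I"
  using eventually_within.random_const[OF assms(2,1)] eventually_within.I[OF assms(2)]
  unfolding I_R_def by blast

lemma I_R_subset_unit_interval:
  assumes "forecasting_system \<phi>" "random R \<phi> \<omega>"
  shows "I_R R \<omega> \<subseteq> {0..1}"
proof (rule I_R_subset_interval[OF assms(2)])
  show "eventually_within {0..1} \<phi> (\<lambda>_. True) \<omega> 0"
    using assms(1) forecasting_system_eq[OF assms(1)]
    by unfold_locales (auto intro: intervalsI decidable_on_const)
qed

lemma liminf_lower_fc_le_I_R:
  assumes fs: "forecasting_system \<phi>" and lower: "computable_real enc_sit (lower_fc \<phi>)"
    and random: "random R \<phi> \<omega>" and x: "x \<in> I_R R \<omega>"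
  shows "liminf (\<lambda>n. ereal (lower_fc \<phi> (pre \<omega> n))) \<le> ereal x"
proof (rule ccontr)
  have "0 \<le> x" using x I_R_subset_unit_interval[OF fs random] by auto
  moreover assume "\<not> ?thesis"
  ultimately obtain b P N where b: "x < b" and P: "decidable_on enc_sit P"
    "\<And>s. P s \<Longrightarrow> b < lower_fc \<phi> s" "\<And>n. N \<le> n \<Longrightarrow> P (pre \<omega> n)"
    using eventually_above_decidable[OF lower] by (metis not_le)
  have "b \<le> 1" using P(2)[OF P(3)[OF order_refl]] forecasting_system_eq(3,4)[OF fs, of "pre \<omega> N"]
    by linarith
  have "eventually_within {b..1} \<phi> P \<omega> N"
  proof
    show "\<phi> s \<subseteq> {b..1}" if "P s" for s
      using P(2)[OF that] forecasting_system_eq[OF fs, of s] by auto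
  qed (use fs P \<open>0 \<le> x\<close> b \<open>b \<le> 1\<close> in \<open>auto intro: intervalsI\<close>)
  then show False using I_R_subset_interval[OF random] x b by fastforce
qed

lemma limsup_upper_fc_ge_I_R:
  assumes fs: "forecasting_system \<phi>" and upper: "computable_real enc_sit (upper_fc \<phi>)"
    and random: "random R \<phi> \<omega>" and x: "x \<in> I_R R \<omega>"
  shows "ereal x \<le> limsup (\<lambda>n. ereal (upper_fc \<phi> (pre \<omega> n)))"
proof (rule ccontr)
  have nonneg: "0 \<le> upper_fc \<phi> s" for s using forecasting_system_eq[OF fs, of s] by simp
  assume "\<not> ?thesis"
  then obtain b P N where b: "b < x" and P: "decidable_on enc_sit P"
    "\<And>s. P s \<Longrightarrow> upper_fc \<phi> s < b" "\<And>n. N \<le> n \<Longrightarrow> P (pre \<omega> n)"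
    using eventually_below_decidable[OF upper nonneg] by (metis not_le)
  have "0 \<le> b" using P(2)[OF P(3)[OF order_refl]] nonneg[of "pre \<omega> N"] by linarith
  have "b \<le> 1" using b x I_R_subset_unit_interval[OF fs random] by auto
  have "eventually_within {0..b} \<phi> P \<omega> N"
  proof
    show "\<phi> s \<subseteq> {0..b}" if "P s" for s
      using P(2)[OF that] forecasting_system_eq[OF fs, of s] by auto
  qed (use fs P \<open>0 \<le> b\<close> \<open>b \<le> 1\<close> in \<open>auto intro: intervalsI\<close>)
  then show False using I_R_subset_interval[OF random] x b by fastforce
qed

theorem proposition5:
  fixes R :: rnotion and \<phi> :: "bool list \<Rightarrow> real set" and \<omega> :: "nat \<Rightarrow> bool"
  assumes "forecasting_system \<phi>" and "computable_fs \<phi>" and "random R \<phi> \<omega>"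
  shows "I_R R \<omega> \<subseteq> I_phi \<phi> \<omega>"
proof
  fix x assume "x \<in> I_R R \<omega>"
  then show "x \<in> I_phi \<phi> \<omega>"
    using liminf_lower_fc_le_I_R limsup_upper_fc_ge_I_R assms
    unfolding computable_fs_def I_phi_def by blast
qed

end
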